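(* Let $K=\mathbb{F}_2(t)$ and let $\omega$ be a place of $K$ with $\omega\notin\{t,t^{-1}\}$. Then for $\operatorname{Re}(s)>1$, \[\widehat{f_\omega H_\omega}(s;\mathbbm{1})=1+\frac12\left(\frac{1}{2^{(s-1)\deg\omega}}\left(1+\frac{1-2^{-\deg\omega}}{2^{(s-1)\deg\omega}-1}\right)-\frac{1}{2^{s\deg\omega-1}}\right),\] equivalently \[\widehat{f_\omega H_\omega}(s;\mathbbm{1})=1+\frac12\cdot\frac{1}{2^{(s-1)\deg\omega}}\left(1-\frac{1}{2^{\deg\omega-1}}+\frac{1-2^{-\deg\omega}}{2^{(s-1)\deg\omega}(1-2^{-(s-1)\deg\omega})}\right).\]
   Context: $K_\omega$ is the completion of $K$ at $\omega$, $\mathcal{O}_\omega$ its ring of integers, $\mathrm{d}y$ the Haar measure on $K_\omega$ with $\mathcal{O}_\omega$ of volume $1$, $|y|_\omega=2^{-\deg\omega\cdot v_\omega(y)}$, $H_\omega(y)=\max\{1,|y|_\omega\}$. $f_\omega:K_\omega\to\{0,1\}$ is $f_\omega(y)=1$ if the conic $x_0^2+x_0x_1+yx_1^2=tx_2^2$ has a $K_\omega$-point and $0$ otherwise. $\widehat{f_\omega H_\omega}(s;\mathbbm{1})=\int_{K_\omega}f_\omega(y)H_\omega(y)^{-s}\,\mathrm{d}y$. *)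

theory Defs
  imports "HOL-Analysis.Analysis" "HOL-Library.Z2"
    "HOL-Computational_Algebra.Polynomial" "HOL-Computational_Algebra.Fraction_Field"
begin

text \<open>F_2 is the type bit, K = F_2(t) is bit poly fract.
  A place omega of K other than t and t^{-1} (the infinite place) is given by a
  monic irreducible polynomial pi in F_2[t] with pi different from t; deg omega = degree pi.
  The completion K_omega is modelled by pi-adic digit expansions
  y = sum over i of a_i pi^i, with digits a_i taken from the residues mod pi
  (polynomials of degree < deg pi) and a_i = 0 for all sufficiently negative i.
  This representation is unique, so K_omega is the set Kom pi below.\<close>

definition tpoly :: "bit poly" where
  "tpoly = [:0, 1:]"

definition Kom :: "bit poly \<Rightarrow> (int \<Rightarrow> bit poly) set" where
  "Kom p = {a. (\<forall>i. a i = a i mod p) \<and> (\<exists>N. \<forall>i<N. a i = 0)}"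

definition psum :: "bit poly \<Rightarrow> (int \<Rightarrow> bit poly) \<Rightarrow> int \<Rightarrow> bit poly fract" where
  "psum p a n = (\<Sum>i\<in>{i. i < n \<and> a i \<noteq> 0}. Fract (a i) 1 * (Fract p 1) powi i)"

text \<open>r in K lies in pi^M times the local ring at pi.\<close>
definition padic_small :: "bit poly \<Rightarrow> nat \<Rightarrow> bit poly fract \<Rightarrow> bool" where
  "padic_small p M r \<longleftrightarrow> (\<exists>a b. b \<noteq> 0 \<and> coprime b p \<and> p ^ M dvd a \<and> r = Fract a b)"

text \<open>The value of the quadratic form x0^2 + x0 x1 + y x1^2 - t x2^2 at the pi-adic
  truncations; the form vanishes at (x0,x1,x2) in K_omega iff these values tend to 0.\<close>
definition conic_trunc ::
  "bit poly \<Rightarrow> (int \<Rightarrow> bit poly) \<Rightarrow> (int \<Rightarrow> bit poly) \<Rightarrow> (int \<Rightarrow> bit poly) \<Rightarrow> (int \<Rightarrow> bit poly)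
     \<Rightarrow> nat \<Rightarrow> bit poly fract" where
  "conic_trunc p y x0 x1 x2 n =
     (psum p x0 (int n))^2 + psum p x0 (int n) * psum p x1 (int n)
     + psum p y (int n) * (psum p x1 (int n))^2 - Fract tpoly 1 * (psum p x2 (int n))^2"

definition conic_has_point :: "bit poly \<Rightarrow> (int \<Rightarrow> bit poly) \<Rightarrow> bool" where
  "conic_has_point p y \<longleftrightarrow>
     (\<exists>x0\<in>Kom p. \<exists>x1\<in>Kom p. \<exists>x2\<in>Kom p. \<not> (x0 = (\<lambda>_. 0) \<and> x1 = (\<lambda>_. 0) \<and> x2 = (\<lambda>_. 0)) \<and>
        (\<forall>M. \<forall>\<^sub>F n in sequentially. padic_small p M (conic_trunc p y x0 x1 x2 n)))"

definition f_om :: "bit poly \<Rightarrow> (int \<Rightarrow> bit poly) \<Rightarrow> real" where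
  "f_om p y = (if conic_has_point p y then 1 else 0)"

definition val_om :: "(int \<Rightarrow> bit poly) \<Rightarrow> int" where
  "val_om a = (THE i. a i \<noteq> 0 \<and> (\<forall>j<i. a j = 0))"

definition abs_om :: "bit poly \<Rightarrow> (int \<Rightarrow> bit poly) \<Rightarrow> real" where
  "abs_om p a = (if a = (\<lambda>_. 0) then 0 else 2 powr (- (real (degree p) * real_of_int (val_om a))))"

definition H_om :: "bit poly \<Rightarrow> (int \<Rightarrow> bit poly) \<Rightarrow> real" where
  "H_om p a = max 1 (abs_om p a)"

text \<open>Balls c + pi^n O_omega: elements whose digits below n agree with those of c.\<close>
definition ball_om :: "bit poly \<Rightarrow> (int \<Rightarrow> bit poly) \<Rightarrow> int \<Rightarrow> (int \<Rightarrow> bit poly) set" where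
  "ball_om p c n = {y \<in> Kom p. \<forall>i<n. y i = c i}"

text \<open>Haar measure on K_omega normalised by vol(O_omega) = 1 (Borel sets generated by
  the balls; a Haar measure gives c + pi^n O_omega volume 2^(-deg * n)).\<close>
definition haar_om :: "bit poly \<Rightarrow> (int \<Rightarrow> bit poly) measure \<Rightarrow> bool" where
  "haar_om p \<mu> \<longleftrightarrow>
     space \<mu> = Kom p \<and>
     sets \<mu> = sigma_sets (Kom p) {ball_om p c n | c n. c \<in> Kom p} \<and>
     (\<forall>c\<in>Kom p. \<forall>n. emeasure \<mu> (ball_om p c n) = ennreal (2 powr (- (real (degree p) * real_of_int n))))"

end

theory Submission
  imports Defs "HOL-Computational_Algebra.Polynomial_Factorial" "HOL-Computational_Algebra.Field_as_Ring"
begin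

text \<open>
  Let \<open>d\<close> be the degree of \<open>p\<close> and \<open>q = 2\<^sup>d\<close>. Putting \<open>x\<^sub>1 = 1\<close>, the conic has a \<open>K\<^sub>\<omega>\<close>-point iff
  \<open>y = a\<^sup>2 + a + t b\<^sup>2\<close> is solvable in \<open>K\<^sub>\<omega>\<close>. This is decided by an additive \<open>\<bbbF>\<^sub>2\<close>-valued symbol on \<open>K\<close>
  that vanishes on \<open>\<O>\<^sub>\<omega>\<close> and on \<open>t r\<^sup>2\<close>, is invariant under \<open>r \<mapsto> r\<^sup>2\<close>, and on simple poles \<open>u/p\<close> is a
  nonzero linear form in the residue \<open>u\<close>; it is computed recursively from
  \<open>\<bbbF>\<^sub>2[t] = \<bbbF>\<^sub>2[t]\<^sup>2 \<oplus> t \<bbbF>\<^sub>2[t]\<^sup>2\<close>. A point forces the symbol of \<open>y\<close> to vanish (divide by the leading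
  monomial of the first nonzero coordinate). Conversely, if it vanishes, the polar part of \<open>y\<close> is
  \<open>a\<^sup>2 + a + t b\<^sup>2\<close> modulo \<open>\<O>\<^sub>\<omega>\<close>, and the rest is solved by Hensel lifting for \<open>z\<^sup>2 + z\<close>.

  So \<open>f\<^sub>\<omega> = H\<^sub>\<omega> = 1\<close> on \<open>\<O>\<^sub>\<omega>\<close>. On the shell \<open>v(y) = -1\<close>, \<open>f\<^sub>\<omega> = 1\<close> on \<open>2\<^sup>d\<^sup>-\<^sup>1 - 1\<close> of the
  residue classes \<open>u/p + \<O>\<^sub>\<omega>\<close>; on a shell \<open>v(y) = -n\<close> with \<open>n \<ge> 2\<close>, changing the digit at \<open>p\<^sup>-\<^sup>1\<close>
  toggles the symbol by that linear form, so \<open>f\<^sub>\<omega> = 1\<close> on exactly half of the shell. As \<open>H\<^sub>\<omega> = q\<^sup>n\<close>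
  there, the integral is the series \<open>1 + (q/2 - 1) q\<^sup>-\<^sup>s + \<Sum>\<^sub>n\<^sub>\<ge>\<^sub>2 (q\<^sup>n - q\<^sup>n\<^sup>-\<^sup>1)/2 \<cdot> q\<^sup>-\<^sup>n\<^sup>s\<close>.
\<close>

text \<open>The Euclidean structure of the field \<open>bit\<close>, making \<open>bit poly\<close> a factorial ring with gcd.\<close>

instantiation bit ::
  "{unique_euclidean_ring, normalization_euclidean_semiring, normalization_semidom_multiplicative}"
begin
definition [simp]: "normalize_bit = (normalize_field :: bit \<Rightarrow> _)"
definition [simp]: "unit_factor_bit = (unit_factor_field :: bit \<Rightarrow> _)"
definition [simp]: "euclidean_size_bit = (euclidean_size_field :: bit \<Rightarrow> _)"
definition [simp]: "division_segment (x :: bit) = 1"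
instance
  by standard (simp_all add: dvd_field_iff field_split_simps split: if_splits)
end

instantiation bit :: euclidean_ring_gcd
begin
definition gcd_bit :: "bit \<Rightarrow> bit \<Rightarrow> bit" where
  "gcd_bit = Euclidean_Algorithm.gcd"
definition lcm_bit :: "bit \<Rightarrow> bit \<Rightarrow> bit" where
  "lcm_bit = Euclidean_Algorithm.lcm"
definition Gcd_bit :: "bit set \<Rightarrow> bit" where
  "Gcd_bit = Euclidean_Algorithm.Gcd"
definition Lcm_bit :: "bit set \<Rightarrow> bit" where
  "Lcm_bit = Euclidean_Algorithm.Lcm"
instance by standard (simp_all add: gcd_bit_def lcm_bit_def Gcd_bit_def Lcm_bit_def)
end

instance bit :: field_gcd ..

context
  assumes char2: "(2::'a::comm_ring_1) = 0"
begin

lemma char2_add_self: "x + x = (0::'a)"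
  using char2 by (metis mult_2 mult_zero_left)

lemma char2_add_self_left: "x + (x + y) = (y::'a)"
  by (simp add: char2_add_self flip: add.assoc)

lemma char2_minus: "- x = (x::'a)"
  using char2_add_self by (metis add_eq_0_iff2)

lemma char2_diff: "x - y = x + (y::'a)"
  by (simp add: char2_minus)

lemma char2_add_eq_0_iff: "x + y = 0 \<longleftrightarrow> x = (y::'a)"
  by (metis char2_add_self_left add_0_right)

lemma char2_power2_add: "(x + y)^2 = x^2 + (y::'a)^2"
  using char2 by (simp add: power2_sum)

end

lemma degree_pderiv_less:
  fixes p :: "'a::{comm_semiring_1,semiring_no_zero_divisors} poly"
  assumes "degree p > 0" shows "degree (pderiv p) < degree p"
proof -
  have "degree (pderiv p) \<le> degree p - 1"
  proof (rule degree_le, intro allI impI)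
    fix i assume "degree p - 1 < i"
    then have "coeff p (Suc i) = 0" by (intro coeff_eq_0) simp
    then show "coeff (pderiv p) i = 0" by (simp add: coeff_pderiv)
  qed
  with assms show ?thesis by simp
qed

lemma degree_Poly_less: "Poly xs \<noteq> 0 \<Longrightarrow> degree (Poly xs) < length xs"
  by (metis coeffs_Poly length_coeffs_degree length_strip_while_le Suc_le_eq)

lemma bij_betw_coeff_list:
  "bij_betw (\<lambda>q. map (coeff q) [0..<n]) {q::'a::zero poly. q = 0 \<or> degree q < n}
     {xs. length xs = n}"
proof (rule bij_betw_byWitness[where f' = Poly])
  show "\<forall>q\<in>{q. q = 0 \<or> degree q < n}. Poly (map (coeff q) [0..<n]) = q"
  proof
    fix q assume "q \<in> {q. q = 0 \<or> degree q < n}"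
    then have "coeff q i = 0" if "n \<le> i" for i
      using that by (auto intro: coeff_eq_0)
    then show "Poly (map (coeff q) [0..<n]) = q"
      by (intro poly_eqI) (auto simp: nth_default_def not_less)
  qed
  show "\<forall>xs\<in>{xs. length xs = n}. map (coeff (Poly xs)) [0..<n] = xs"
    by (auto intro: nth_equalityI simp: nth_default_def)
  show "(\<lambda>q. map (coeff q) [0..<n]) ` {q. q = 0 \<or> degree q < n} \<subseteq> {xs. length xs = n}"
    by auto
  show "Poly ` {xs. length xs = n} \<subseteq> {q. q = 0 \<or> degree q < n}"
    using degree_Poly_less by auto
qed

lemma finite_polys_degree_less: "finite {q::'a::{finite,zero} poly. q = 0 \<or> degree q < n}"
  and card_polys_degree_less: "card {q::'a::{finite,zero} poly. q = 0 \<or> degree q < n} = CARD('a) ^ n"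
proof -
  have lists: "finite {xs :: 'a list. length xs = n}" "card {xs :: 'a list. length xs = n} = CARD('a) ^ n"
    using finite_lists_length_eq[of "UNIV :: 'a set" n] card_lists_length_eq[of "UNIV :: 'a set" n]
    by simp_all
  show "finite {q::'a poly. q = 0 \<or> degree q < n}"
    using bij_betw_finite[OF bij_betw_coeff_list[of n]] lists(1) by blast
  show "card {q::'a poly. q = 0 \<or> degree q < n} = CARD('a) ^ n"
    using bij_betw_same_card[OF bij_betw_coeff_list[of n]] lists(2) by (rule trans)
qed

lemma Fract_add_1 [simp]: "Fract a 1 + Fract b 1 = Fract (a + b) (1::'a::idom)"
  by simp

lemma Fract_mult_1 [simp]: "Fract a 1 * Fract b 1 = Fract (a * b) (1::'a::idom)"
  by simp

lemma power_Fract_1 [simp]: "Fract a 1 ^ n = Fract (a ^ n) (1::'a::idom)"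
  by (induction n) (simp_all add: fract_collapse)

lemma power_Fract: "Fract a b ^ n = Fract (a ^ n) ((b::'a::idom) ^ n)"
  by (induction n) (simp_all add: fract_collapse)

lemma Fract_eq_0_iff: "b \<noteq> 0 \<Longrightarrow> Fract a b = 0 \<longleftrightarrow> a = (0::'a::idom)"
  by (simp add: Zero_fract_def eq_fract)

lemma Fract_add_same_denom: "c \<noteq> 0 \<Longrightarrow> Fract a c + Fract b c = Fract (a + b) (c::'a::idom)"
  by (simp add: algebra_simps mult_fract_cancel flip: mult_fract_cancel[of c "a + b" c])

lemma coprime_bezout_exists:
  assumes "coprime (b::'a::euclidean_ring_gcd) c" shows "\<exists>S T. S * b + T * c = 1"
  using bezout_coefficients_fst_snd[of b c] assms by (metis coprime_iff_gcd_eq_1)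

lemma sums_indicator_disjoint_family:
  fixes c :: "nat \<Rightarrow> 'b::real_normed_vector"
  assumes "disjoint_family A" "y \<in> A m"
  shows "(\<lambda>n. indicator (A n) y *\<^sub>R c n) sums c m"
proof -
  have "indicator (A n) y *\<^sub>R c n = (if n = m then c m else 0)" for n
    using assms by (auto simp: disjoint_family_on_def split: split_indicator)
  then show ?thesis using sums_single[of m "\<lambda>_. c m"] by simp
qed

lemma sums_integral_piecewise_constant:
  fixes c :: "nat \<Rightarrow> 'b::{banach, second_countable_topology}"
  assumes sets: "\<And>n. A n \<in> sets M" and finite: "\<And>n. emeasure M (A n) < \<infinity>"
    and disjoint: "disjoint_family A"
    and on_A: "\<And>n y. y \<in> A n \<Longrightarrow> g y = c n"
    and off_A: "\<And>y. y \<in> space M \<Longrightarrow> (\<And>n. y \<notin> A n) \<Longrightarrow> g y = 0"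
    and summable: "summable (\<lambda>n. measure M (A n) * norm (c n))"
  shows "(\<lambda>n. measure M (A n) *\<^sub>R c n) sums integral\<^sup>L M g"
proof -
  define F where "F = (\<lambda>n y. indicator (A n) y *\<^sub>R c n)"
  have A_space: "A n \<inter> space M = A n" for n
    using sets sets.sets_into_space by blast
  have F_sums: "(\<lambda>n. F n y) sums g y" if "y \<in> space M" for y
    using sums_indicator_disjoint_family[OF disjoint] on_A off_A[OF that]
    by (cases "\<exists>m. y \<in> A m") (auto simp: F_def)
  have "(\<lambda>n. integral\<^sup>L M (F n)) sums (\<integral>y. (\<Sum>n. F n y) \<partial>M)"
  proof (rule sums_integral)
    show "integrable M (F n)" for n
      unfolding F_def using sets finite by auto
    have "summable (\<lambda>n. indicator (A n) y *\<^sub>R norm (c n))" for y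
      using sums_indicator_disjoint_family[OF disjoint, of y _ "\<lambda>n. norm (c n)"]
      by (cases "\<exists>m. y \<in> A m") (auto simp: sums_iff)
    then show "AE y in M. summable (\<lambda>n. norm (F n y))"
      by (simp add: F_def)
    have "(\<integral>y. norm (F n y) \<partial>M) = measure M (A n) * norm (c n)" for n
      using A_space by (simp add: F_def indicator_scaleR_eq_if)
    then show "summable (\<lambda>n. \<integral>y. norm (F n y) \<partial>M)" using summable by simp
  qed
  moreover have "integral\<^sup>L M (F n) = measure M (A n) *\<^sub>R c n" for n
    using A_space sets finite by (simp add: F_def)
  moreover have "(\<integral>y. (\<Sum>n. F n y) \<partial>M) = integral\<^sup>L M g"
    using F_sums by (intro Bochner_Integration.integral_cong) (simp_all add: sums_iff)
  ultimately show ?thesis by simp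
qed

lemma ln_two_complex: "ln (2::complex) = of_real (ln 2)"
  using Ln_of_real[of 2] by simp

lemma of_real_two_powr_powr:
  "complex_of_real (2 powr x) powr w = 2 powr (of_real x * w)"
proof -
  have "ln (complex_of_real (2 powr x)) = of_real x * ln 2"
    by (simp add: Ln_of_real ln_powr ln_two_complex)
  then show ?thesis by (simp add: powr_def mult_ac)
qed

section \<open>Polynomials over \<open>\<bbbF>\<^sub>2\<close>\<close>

lemma two_eq_zero_bit_poly [simp]: "(2::bit poly) = 0"
proof -
  have "(2::bit poly) = [:of_nat 2:]" by (metis of_nat_numeral of_nat_poly)
  then show ?thesis by simp
qed

lemma two_eq_zero_bit_poly_fract [simp]: "(2::bit poly fract) = 0"
proof -
  have "(2::bit poly fract) = Fract (of_nat 2) 1" by (metis of_nat_numeral of_nat_fract)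
  then show ?thesis by (simp add: fract_collapse)
qed

lemmas char2_bit_poly [simp] =
  char2_minus[OF two_eq_zero_bit_poly] char2_diff[OF two_eq_zero_bit_poly]
  char2_add_self[OF two_eq_zero_bit_poly] char2_add_self_left[OF two_eq_zero_bit_poly]
lemmas char2_bit_poly_fract [simp] =
  char2_minus[OF two_eq_zero_bit_poly_fract] char2_diff[OF two_eq_zero_bit_poly_fract]
  char2_add_self[OF two_eq_zero_bit_poly_fract] char2_add_self_left[OF two_eq_zero_bit_poly_fract]

lemmas power2_add_bit_poly = char2_power2_add[OF two_eq_zero_bit_poly]
lemmas power2_add_bit_poly_fract = char2_power2_add[OF two_eq_zero_bit_poly_fract]
lemmas add_eq_0_iff_bit_poly = char2_add_eq_0_iff[OF two_eq_zero_bit_poly]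

lemma UNIV_bit: "(UNIV :: bit set) = {0, 1}"
  by (auto intro: bit.exhaust)

instance bit :: finite
  by standard (simp add: UNIV_bit)

lemma card_UNIV_bit: "CARD(bit) = 2"
  by (simp add: UNIV_bit)

lemma degree_tpoly [simp]: "degree tpoly = 1"
  by (simp add: tpoly_def)

lemma tpoly_nonzero [simp]: "tpoly \<noteq> 0"
  by (simp add: tpoly_def)

lemma pderiv_tpoly [simp]: "pderiv tpoly = 1"
  by (simp add: tpoly_def pderiv_pCons)

lemma pderiv_power2_bit_poly [simp]: "pderiv ((A::bit poly)^2) = 0"
  by (simp add: power2_eq_square pderiv_mult)

lemma even_odd_decomp_exists: "\<exists>A B. (N::bit poly) = A^2 + tpoly * B^2"
proof (induction N)
  case 0
  show ?case by (intro exI[of _ 0]) simp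
next
  case (pCons a N)
  then obtain A B where AB: "N = A^2 + tpoly * B^2" by blast
  have const_sq: "[:a:]^2 = [:a:]"
    by (cases a) (simp_all add: power2_eq_square)
  have "pCons a N = [:a:] + tpoly * N"
    by (simp add: tpoly_def)
  also have "\<dots> = ([:a:] + tpoly * B)^2 + tpoly * A^2"
    by (simp add: AB power2_add_bit_poly const_sq power_mult_distrib algebra_simps power2_eq_square)
  finally show ?case by blast
qed

lemma even_odd_decomp_zero:
  assumes "(A::bit poly)^2 + tpoly * B^2 = 0" shows "A = 0" "B = 0"
proof -
  have sq: "A^2 = tpoly * B^2" using assms add_eq_0_iff_bit_poly by blast
  show "B = 0"
  proof (rule ccontr)
    assume "B \<noteq> 0"
    then have "A \<noteq> 0" using sq by auto
    have "degree (A^2) = degree (tpoly * B^2)" using sq by simp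
    then have "2 * degree A = 1 + 2 * degree B"
      using \<open>A \<noteq> 0\<close> \<open>B \<noteq> 0\<close> by (simp add: degree_mult_eq degree_power_eq)
    then show False by presburger
  qed
  with sq show "A = 0" by simp
qed

definition sqrt_even :: "bit poly \<Rightarrow> bit poly" where
  "sqrt_even N = (SOME A. \<exists>B. N = A^2 + tpoly * B^2)"

definition sqrt_odd :: "bit poly \<Rightarrow> bit poly" where
  "sqrt_odd N = (SOME B. N = (sqrt_even N)^2 + tpoly * B^2)"

lemma even_odd_decomp: "N = (sqrt_even N)^2 + tpoly * (sqrt_odd N)^2"
proof -
  have "\<exists>B. N = (sqrt_even N)^2 + tpoly * B^2"
    unfolding sqrt_even_def using even_odd_decomp_exists[of N] by (rule someI_ex)
  then show ?thesis unfolding sqrt_odd_def by (rule someI_ex)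
qed

lemma even_odd_decomp_unique:
  assumes "N = A^2 + tpoly * B^2"
  shows "sqrt_even N = A" "sqrt_odd N = B"
proof -
  have "(sqrt_even N + A)^2 + tpoly * (sqrt_odd N + B)^2 = 0"
    using even_odd_decomp[of N] assms by (simp add: power2_add_bit_poly algebra_simps)
  from even_odd_decomp_zero[OF this] show "sqrt_even N = A" "sqrt_odd N = B"
    by (simp_all add: add_eq_0_iff_bit_poly)
qed

lemma sqrt_even_add: "sqrt_even (M + N) = sqrt_even M + sqrt_even N"
proof -
  have "M + N = (sqrt_even M + sqrt_even N)^2 + tpoly * (sqrt_odd M + sqrt_odd N)^2"
    using even_odd_decomp[of M] even_odd_decomp[of N] by (simp add: power2_add_bit_poly algebra_simps)
  from even_odd_decomp_unique(1)[OF this] show ?thesis .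
qed

lemma sqrt_even_power2 [simp]: "sqrt_even (A^2) = A"
  using even_odd_decomp_unique[of "A^2" A 0] by simp

lemma sqrt_even_mult_power2: "sqrt_even (N * M^2) = sqrt_even N * M"
proof -
  have "N * M^2 = (sqrt_even N * M)^2 + tpoly * (sqrt_odd N * M)^2"
    by (subst even_odd_decomp[of N]) (simp add: algebra_simps power_mult_distrib)
  from even_odd_decomp_unique(1)[OF this] show ?thesis .
qed

lemma pderiv_eq_sqrt_odd_power2: "pderiv N = (sqrt_odd N)^2"
  by (subst even_odd_decomp[of N]) (simp add: pderiv_add pderiv_mult)

section \<open>Residues modulo an irreducible polynomial\<close>

locale place =
  fixes p :: "bit poly"
  assumes irreducible: "irreducible p" and not_tpoly: "p \<noteq> tpoly"
begin

lemma p_nonzero [simp]: "p \<noteq> 0"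
  using irreducible by auto

lemma prime_elem_p: "prime_elem p"
  using irreducible irreducible_imp_prime_elem by blast

lemma not_is_unit_p: "\<not> is_unit p"
  using irreducible irreducible_not_unit by blast

lemma degree_p_pos: "degree p > 0"
  using not_is_unit_p is_unit_iff_degree[OF p_nonzero] by simp

lemma p_dvd_multD: "p dvd a * b \<Longrightarrow> p dvd a \<or> p dvd b"
  using prime_elem_p prime_elem_dvd_mult_iff by blast

lemma p_dvd_powerD: "p dvd a ^ n \<Longrightarrow> p dvd a"
  using prime_elem_p prime_elem_dvd_power by blast

lemma coprime_p_power: "\<not> p dvd b \<Longrightarrow> coprime (p ^ n) b"
  using prime_elem_imp_coprime[OF prime_elem_p] by simp

lemma not_p_dvd_tpoly: "\<not> p dvd tpoly"
proof
  assume "p dvd tpoly"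
  then obtain k where k: "tpoly = p * k" by (elim dvdE)
  then have "k \<noteq> 0" by auto
  then have "degree tpoly = degree p + degree k" by (metis k degree_mult_eq p_nonzero)
  then have "degree k = 0" using degree_p_pos by simp
  then obtain c where "k = [:c:]" by (metis degree_eq_zeroE)
  with \<open>k \<noteq> 0\<close> have "k = 1" by simp
  then show False using k not_tpoly by simp
qed

lemma not_p_dvd_pderiv: "\<not> p dvd pderiv p"
proof
  assume dvd: "p dvd pderiv p"
  have "pderiv p = 0"
  proof (rule ccontr)
    assume "pderiv p \<noteq> 0"
    with dvd have "degree p \<le> degree (pderiv p)" by (rule dvd_imp_degree_le)
    with degree_pderiv_less[OF degree_p_pos] show False by simp
  qed
  then have "p = sqrt_even p * sqrt_even p"
    using even_odd_decomp[of p] pderiv_eq_sqrt_odd_power2[of p] by (simp add: power2_eq_square)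
  then have "is_unit (sqrt_even p)" using irreducibleD[OF irreducible] by blast
  then have "is_unit p" by (metis \<open>p = sqrt_even p * sqrt_even p\<close> is_unit_mult_iff)
  with not_is_unit_p show False by simp
qed

definition digits :: "bit poly set" where
  "digits = {u. u mod p = u}"

lemma in_digits_iff: "u \<in> digits \<longleftrightarrow> u = 0 \<or> degree u < degree p"
proof
  assume "u \<in> digits"
  then have "u mod p = u" by (simp add: digits_def)
  then show "u = 0 \<or> degree u < degree p"
    by (metis degree_mod_less' p_nonzero)
next
  assume "u = 0 \<or> degree u < degree p"
  then show "u \<in> digits" by (auto simp: digits_def intro: mod_poly_less)
qed

lemma mod_in_digits [simp]: "u mod p \<in> digits"
  by (simp add: digits_def)

lemma zero_in_digits [simp]: "0 \<in> digits"
  by (simp add: digits_def)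

lemma mod_digit [simp]: "u \<in> digits \<Longrightarrow> u mod p = u"
  by (simp add: digits_def)

lemma add_in_digits [simp]: "u \<in> digits \<Longrightarrow> v \<in> digits \<Longrightarrow> u + v \<in> digits"
  unfolding digits_def by (simp add: poly_mod_add_left)

lemma digit_eq_0_if_p_dvd: "u \<in> digits \<Longrightarrow> p dvd u \<Longrightarrow> u = 0"
  by (metis mod_digit dvd_imp_mod_0)

lemma digits_eq_if_p_dvd_add: "u \<in> digits \<Longrightarrow> v \<in> digits \<Longrightarrow> p dvd (u + v) \<Longrightarrow> u = v"
  using digit_eq_0_if_p_dvd[of "u + v"] add_eq_0_iff_bit_poly by simp

lemma mod_eq_iff_p_dvd_add: "u mod p = v mod p \<longleftrightarrow> p dvd (u + v)"
  using mod_eq_dvd_iff[of u p v] by simp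

lemma finite_digits: "finite digits"
  and card_digits: "card digits = 2 ^ degree p"
proof -
  have digits_eq: "digits = {u. u = 0 \<or> degree u < degree p}" by (auto simp: in_digits_iff)
  show "finite digits" unfolding digits_eq by (rule finite_polys_degree_less)
  show "card digits = 2 ^ degree p"
    unfolding digits_eq card_polys_degree_less card_UNIV_bit ..
qed

section \<open>The symbol on simple poles\<close>

text \<open>For \<open>u p = C\<^sup>2 + t D\<^sup>2\<close> the fraction \<open>(u + C)/p\<close> equals \<open>a\<^sup>2 + a + t b\<^sup>2\<close> with \<open>a = C/p\<close>,
  \<open>b = D/p\<close>. So \<open>w/p\<close> has trivial symbol for the residues \<open>w \<in> triv_digits\<close>, and \<open>symb1\<close>
  detects the other residues.\<close>

definition triv_map :: "bit poly \<Rightarrow> bit poly" where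
  "triv_map u = (u + sqrt_even (u * p)) mod p"

definition triv_digits :: "bit poly set" where
  "triv_digits = triv_map ` digits"

definition symb1 :: "bit poly \<Rightarrow> bool" where
  "symb1 u \<longleftrightarrow> u mod p \<notin> triv_digits"

definition kernel_gen :: "bit poly" where
  "kernel_gen = (tpoly * pderiv p) mod p"

lemma sqrt_even_mult_p_cong: "p dvd (sqrt_even (u * p))^2 + tpoly * pderiv p * u"
proof -
  define A B where "A = sqrt_even (u * p)" and "B = sqrt_odd (u * p)"
  have "u * p = A^2 + tpoly * B^2"
    unfolding A_def B_def by (rule even_odd_decomp)
  then have "A^2 = u * p + tpoly * B^2" by (simp add: add.assoc)
  moreover have "B^2 = u * pderiv p + p * pderiv u"
    using pderiv_eq_sqrt_odd_power2[of "u * p"] unfolding B_def by (simp add: pderiv_mult)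
  ultimately have "A^2 + tpoly * pderiv p * u = p * (u + tpoly * pderiv u)"
    by (simp add: algebra_simps)
  then show ?thesis unfolding A_def by simp
qed

lemma kernel_gen_in_digits [simp]: "kernel_gen \<in> digits"
  by (simp add: kernel_gen_def)

lemma kernel_gen_nonzero: "kernel_gen \<noteq> 0"
proof
  assume "kernel_gen = 0"
  then have "p dvd tpoly * pderiv p" by (simp add: kernel_gen_def mod_eq_0_iff_dvd)
  then show False using p_dvd_multD not_p_dvd_tpoly not_p_dvd_pderiv by blast
qed

lemma triv_map_in_digits [simp]: "triv_map u \<in> digits"
  by (simp add: triv_map_def)

lemma triv_map_add: "triv_map (u + v) = triv_map u + triv_map v"
  by (simp add: triv_map_def distrib_right sqrt_even_add poly_mod_add_left algebra_simps)

lemma triv_map_0 [simp]: "triv_map 0 = 0"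
  using sqrt_even_power2[of 0] by (simp add: triv_map_def)

lemma triv_map_eq_0_iff:
  assumes u: "u \<in> digits" shows "triv_map u = 0 \<longleftrightarrow> u = 0 \<or> u = kernel_gen"
proof -
  define A where "A = sqrt_even (u * p)"
  have cong: "p dvd A^2 + tpoly * pderiv p * u"
    unfolding A_def by (rule sqrt_even_mult_p_cong)
  have "triv_map u = 0 \<longleftrightarrow> p dvd (u + A)"
    by (simp add: triv_map_def A_def mod_eq_0_iff_dvd)
  also have "\<dots> \<longleftrightarrow> p dvd (u + A)^2"
    by (metis p_dvd_powerD dvd_mult2 power2_eq_square)
  also have "\<dots> \<longleftrightarrow> p dvd u * (u + tpoly * pderiv p)"
  proof -
    have "(u + A)^2 = u * (u + tpoly * pderiv p) + (A^2 + tpoly * pderiv p * u)"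
      by (simp add: power2_add_bit_poly algebra_simps power2_eq_square)
    then show ?thesis using cong by (metis dvd_add_left_iff)
  qed
  also have "\<dots> \<longleftrightarrow> p dvd u \<or> p dvd (u + tpoly * pderiv p)"
    using p_dvd_multD by auto
  also have "\<dots> \<longleftrightarrow> u = 0 \<or> u = kernel_gen"
    using u digit_eq_0_if_p_dvd mod_eq_iff_p_dvd_add[of u "tpoly * pderiv p"]
    by (auto simp: kernel_gen_def)
  finally show ?thesis .
qed

lemma triv_map_eq_iff:
  assumes "u \<in> digits" "v \<in> digits"
  shows "triv_map v = triv_map u \<longleftrightarrow> v = u \<or> v = u + kernel_gen"
proof -
  have "triv_map v = triv_map u \<longleftrightarrow> triv_map (u + v) = 0"
    by (metis triv_map_add add_eq_0_iff_bit_poly)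
  also have "\<dots> \<longleftrightarrow> u + v = 0 \<or> u + v = kernel_gen"
    using assms by (simp add: triv_map_eq_0_iff)
  also have "\<dots> \<longleftrightarrow> v = u \<or> v = u + kernel_gen"
    by (metis add_eq_0_iff_bit_poly char2_bit_poly(4))
  finally show ?thesis .
qed

lemma triv_digits_subset: "triv_digits \<subseteq> digits"
  by (auto simp: triv_digits_def)

lemma finite_triv_digits: "finite triv_digits"
  using triv_digits_subset finite_digits finite_subset by blast

lemma triv_digits_add: "w \<in> triv_digits \<Longrightarrow> w' \<in> triv_digits \<Longrightarrow> w + w' \<in> triv_digits"
  unfolding triv_digits_def by (auto simp: image_iff triv_map_add[symmetric])

lemma card_digits_eq_double: "card digits = 2 * card triv_digits"
proof -
  define fibre where "fibre w = {u \<in> digits. triv_map u = w}" for w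
  have card_fibre: "card (fibre w) = 2" if w: "w \<in> triv_digits" for w
  proof -
    obtain u where u: "u \<in> digits" "w = triv_map u"
      using w unfolding triv_digits_def by blast
    have "fibre w = {u, u + kernel_gen}"
      using u triv_map_eq_iff by (auto simp: fibre_def)
    moreover have "u \<noteq> u + kernel_gen" using kernel_gen_nonzero by (metis add_cancel_left_right)
    ultimately show ?thesis by simp
  qed
  have "digits = (\<Union>w\<in>triv_digits. fibre w)"
    by (auto simp: fibre_def triv_digits_def)
  also have "card \<dots> = (\<Sum>w\<in>triv_digits. card (fibre w))"
    using finite_triv_digits finite_digits by (intro card_UN_disjoint) (auto simp: fibre_def)
  also have "\<dots> = 2 * card triv_digits" using card_fibre by simp
  finally show ?thesis .
qed

lemma two_power_degree_p: "(2::'a::comm_semiring_1) ^ degree p = 2 * 2 ^ (degree p - 1)"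
  using degree_p_pos by (cases "degree p") simp_all

lemma card_triv_digits: "card triv_digits = 2 ^ (degree p - 1)"
  using card_digits_eq_double card_digits two_power_degree_p[where 'a=nat] by simp

lemma nontriv_digits_add:
  assumes u: "u \<in> digits - triv_digits" and v: "v \<in> digits - triv_digits"
  shows "u + v \<in> triv_digits"
proof -
  have "card (digits - triv_digits) = card triv_digits"
    using card_digits_eq_double card_Diff_subset[OF finite_triv_digits triv_digits_subset] by simp
  moreover have "(+) u ` triv_digits \<subseteq> digits - triv_digits"
  proof -
    have "u + w \<notin> triv_digits" if "w \<in> triv_digits" for w
      using u that triv_digits_add[of w "u + w"] by (auto simp: add.left_commute)
    then show ?thesis using u triv_digits_subset by auto
  qed
  moreover have "card ((+) u ` triv_digits) = card triv_digits"
    by (rule card_image) (simp add: inj_on_def)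
  ultimately have "(+) u ` triv_digits = digits - triv_digits"
    using card_subset_eq finite_digits by (metis finite_Diff)
  then obtain w where "w \<in> triv_digits" "v = u + w" using v by blast
  then show ?thesis by simp
qed

lemma symb1_add: "symb1 (u + v) \<longleftrightarrow> symb1 u \<noteq> symb1 v"
proof -
  define u' v' where "u' = u mod p" and "v' = v mod p"
  have digits: "u' \<in> digits" "v' \<in> digits" by (simp_all add: u'_def v'_def)
  have cancel: "u' + (u' + v') = v'" "(u' + v') + v' = u'"
    by (simp_all add: add.assoc)
  have "u' + v' \<in> triv_digits \<longleftrightarrow> (u' \<in> triv_digits \<longleftrightarrow> v' \<in> triv_digits)"
    using triv_digits_add[of u' "u' + v'"] triv_digits_add[of "u' + v'" v'] triv_digits_add[of u' v']
      nontriv_digits_add[of u' v'] digits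
    unfolding cancel by blast
  moreover have "(u + v) mod p = u' + v'" by (simp add: u'_def v'_def poly_mod_add_left)
  ultimately show ?thesis by (simp add: symb1_def u'_def v'_def)
qed

lemma zero_in_triv_digits [simp]: "0 \<in> triv_digits"
  unfolding triv_digits_def by (metis image_eqI triv_map_0 zero_in_digits)

lemma symb1_p_mult [simp]: "\<not> symb1 (k * p)"
  by (simp add: symb1_def)

lemma symb1_mod [simp]: "symb1 (u mod p) \<longleftrightarrow> symb1 u"
  by (simp add: symb1_def)

lemma symb1_sqrt_even_mult_p: "symb1 (sqrt_even (u * p)) \<longleftrightarrow> symb1 u"
proof -
  define u' where "u' = u mod p"
  have u: "u = u' + (u div p) * p" unfolding u'_def by (simp add: div_mult_mod_eq add.commute)
  have "u * p = u' * p + (u div p) * p^2"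
    by (subst u) (simp add: algebra_simps power2_eq_square)
  then have "sqrt_even (u * p) = sqrt_even (u' * p) + sqrt_even (u div p) * p"
    by (simp add: sqrt_even_add sqrt_even_mult_power2)
  moreover have "\<not> symb1 (u' + sqrt_even (u' * p))"
    by (auto simp: symb1_def triv_digits_def triv_map_def u'_def)
  ultimately show ?thesis by (simp add: symb1_add u'_def)
qed

end

section \<open>The symbol on \<open>\<bbbF>\<^sub>2(t)\<close>\<close>

context place
begin

text \<open>\<open>symb_frac N n\<close> is the symbol of \<open>N/p\<^sup>n\<close>. The recursion reflects
  \<open>N/p\<^sup>2\<^sup>m = (sqrt_even N/p\<^sup>m)\<^sup>2 + t (sqrt_odd N/p\<^sup>m)\<^sup>2\<close> and \<open>N/p\<^sup>2\<^sup>m\<^sup>+\<^sup>1 = N p/p\<^sup>2\<^sup>m\<^sup>+\<^sup>2\<close>, the symbol being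
  invariant under squaring and trivial on \<open>t r\<^sup>2\<close>.\<close>

function (sequential) symb_frac :: "bit poly \<Rightarrow> nat \<Rightarrow> bool" where
  "symb_frac N 0 = False"
| "symb_frac N (Suc 0) = symb1 N"
| "symb_frac N (Suc (Suc n)) =
     (if even n then symb_frac (sqrt_even N) (Suc (n div 2))
      else symb_frac (sqrt_even (N * p)) (Suc (Suc (n div 2))))"
  by pat_completeness auto
termination
  by (relation "Wellfounded.measure snd") (auto, presburger)

lemma symb_frac_add: "symb_frac (N + M) n \<longleftrightarrow> symb_frac N n \<noteq> symb_frac M n"
  by (induction N n arbitrary: M rule: symb_frac.induct)
    (simp_all add: symb1_add sqrt_even_add distrib_right)

lemma symb_frac_0 [simp]: "\<not> symb_frac 0 n"
  using symb_frac_add[of 0 0 n] by simp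

lemma symb_frac_mult_p: "symb_frac (N * p) (Suc n) \<longleftrightarrow> symb_frac N n"
proof (induction n arbitrary: N rule: less_induct)
  case (less n)
  consider "n = 0" | "n = 1" | k where "n = Suc (Suc k)"
    by (metis One_nat_def not0_implies_Suc)
  then show ?case
  proof cases
    case 3
    show ?thesis
    proof (cases "even k")
      case True
      have "sqrt_even (N * p * p) = sqrt_even N * p"
        using sqrt_even_mult_power2[of N p] by (simp add: power2_eq_square mult.assoc)
      moreover have "symb_frac (sqrt_even N * p) (Suc (Suc (k div 2))) = symb_frac (sqrt_even N) (Suc (k div 2))"
        using 3 by (intro less.IH) simp
      moreover have "Suc k div 2 = k div 2" using True by presburger
      ultimately show ?thesis using 3 True by simp
    next
      case False
      then have "Suc k div 2 = Suc (k div 2)" by presburger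
      then show ?thesis using 3 False by simp
    qed
  qed (simp_all add: symb1_sqrt_even_mult_p)
qed

lemma symb_frac_mult_p_power: "symb_frac (N * p ^ k) (n + k) \<longleftrightarrow> symb_frac N n"
proof (induction k arbitrary: n)
  case (Suc k)
  have "symb_frac (N * p ^ Suc k) (n + Suc k) = symb_frac ((N * p ^ k) * p) (Suc (n + k))"
    by (simp add: algebra_simps)
  also have "\<dots> = symb_frac N n" by (simp only: symb_frac_mult_p Suc.IH)
  finally show ?case .
qed simp

lemma symb_frac_cong: "p ^ n dvd (N + N') \<Longrightarrow> symb_frac N n \<longleftrightarrow> symb_frac N' n"
proof -
  assume "p ^ n dvd (N + N')"
  then obtain M where "N + N' = M * p ^ n" by (metis dvdE mult.commute)
  then have "\<not> symb_frac (N + N') n" using symb_frac_mult_p_power[of M n 0] by simp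
  then show ?thesis by (simp add: symb_frac_add)
qed

lemma symb_frac_power2: "symb_frac (N^2) (2 * m) \<longleftrightarrow> symb_frac N m"
proof (cases m)
  case (Suc k)
  then have "2 * m = Suc (Suc (2 * k))" by simp
  then show ?thesis using Suc by simp
qed simp

lemma symb_frac_tpoly_power2: "\<not> symb_frac (tpoly * M^2) (2 * m)"
proof (cases m)
  case (Suc k)
  then have "2 * m = Suc (Suc (2 * k))" by simp
  moreover have "sqrt_even (tpoly * M^2) = 0"
    using even_odd_decomp_unique(1)[of "tpoly * M^2" 0 M] by simp
  ultimately show ?thesis using Suc by simp
qed simp

abbreviation unif :: "bit poly fract" where
  "unif \<equiv> Fract p 1"

lemma unif_powi_nat: "unif powi (int n) = Fract (p ^ n) 1"
  by (simp add: power_Fract)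

lemma unif_powi_add: "unif powi (j + k) = unif powi j * unif powi k"
  by (rule power_int_add) (simp add: Fract_eq_0_iff)

lemma unif_powi_neg_nat: "unif powi (- int n) = Fract 1 (p ^ n)"
  by (simp add: power_int_minus power_Fract)

definition val_ge :: "int \<Rightarrow> bit poly fract \<Rightarrow> bool" where
  "val_ge k r \<longleftrightarrow> (\<exists>a b. b \<noteq> 0 \<and> \<not> p dvd b \<and> r = Fract a b * unif powi k)"

lemma val_geI: "\<not> p dvd b \<Longrightarrow> r = Fract a b * unif powi k \<Longrightarrow> val_ge k r"
  unfolding val_ge_def by (metis dvd_0_right)

lemma val_geE:
  assumes "val_ge k r"
  obtains a b where "b \<noteq> 0" "\<not> p dvd b" "r = Fract a b * unif powi k"
  using assms unfolding val_ge_def by blast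

lemma val_ge_0 [simp]: "val_ge k 0"
  by (rule val_geI[of 1 _ 0]) (simp_all add: fract_collapse not_is_unit_p)

lemma val_ge_unif_powi: "val_ge k (unif powi k)"
  by (rule val_geI[of 1 _ 1]) (simp_all add: fract_collapse not_is_unit_p)

lemma val_ge_Fract: "\<not> p dvd b \<Longrightarrow> val_ge 0 (Fract a b)"
  by (rule val_geI[of b _ a]) simp_all

lemma val_ge_poly [simp]: "val_ge 0 (Fract a 1)"
  by (rule val_ge_Fract) (simp add: not_is_unit_p)

lemma val_ge_add:
  assumes "val_ge k r" "val_ge k s" shows "val_ge k (r + s)"
proof -
  obtain a b where ab: "b \<noteq> 0" "\<not> p dvd b" "r = Fract a b * unif powi k"
    using assms(1) by (rule val_geE)
  obtain c d where cd: "d \<noteq> 0" "\<not> p dvd d" "s = Fract c d * unif powi k"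
    using assms(2) by (rule val_geE)
  have "r + s = Fract (a * d + c * b) (b * d) * unif powi k"
    using ab cd by (simp flip: distrib_right)
  moreover have "\<not> p dvd b * d" using ab cd p_dvd_multD by blast
  ultimately show ?thesis by (intro val_geI)
qed

lemma val_ge_mult:
  assumes "val_ge j r" "val_ge k s" shows "val_ge (j + k) (r * s)"
proof -
  obtain a b where ab: "b \<noteq> 0" "\<not> p dvd b" "r = Fract a b * unif powi j"
    using assms(1) by (rule val_geE)
  obtain c d where cd: "d \<noteq> 0" "\<not> p dvd d" "s = Fract c d * unif powi k"
    using assms(2) by (rule val_geE)
  have "r * s = Fract (a * c) (b * d) * unif powi (j + k)"
    using ab cd by (simp add: unif_powi_add algebra_simps)
  moreover have "\<not> p dvd b * d" using ab cd p_dvd_multD by blast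
  ultimately show ?thesis by (intro val_geI)
qed

lemma val_ge_mono:
  assumes "val_ge k r" "j \<le> k" shows "val_ge j r"
proof -
  obtain a b where ab: "b \<noteq> 0" "\<not> p dvd b" "r = Fract a b * unif powi k"
    using assms(1) by (rule val_geE)
  have "unif powi k = Fract (p ^ nat (k - j)) 1 * unif powi j"
    using unif_powi_add[of "k - j" j] unif_powi_nat[of "nat (k - j)"] assms(2) by simp
  then have "r = Fract (a * p ^ nat (k - j)) b * unif powi j"
    using ab by (simp add: mult.assoc)
  then show ?thesis using ab by (intro val_geI)
qed

lemma val_ge_mult_poly: "val_ge k r \<Longrightarrow> val_ge k (r * Fract a 1)"
  using val_ge_mult[of k r 0 "Fract a 1"] by simp

lemma val_ge_mult_unif_powi_iff: "val_ge k (r * unif powi j) \<longleftrightarrow> val_ge (k - j) r"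
proof
  assume "val_ge k (r * unif powi j)"
  from val_ge_mult[OF this val_ge_unif_powi[of "- j"]]
  show "val_ge (k - j) r"
    by (simp add: mult.assoc power_int_minus Fract_eq_0_iff)
next
  assume "val_ge (k - j) r"
  from val_ge_mult[OF this val_ge_unif_powi[of j]] show "val_ge k (r * unif powi j)" by simp
qed

lemma val_ge_poly_iff: "val_ge (int n) (Fract a 1) \<longleftrightarrow> p ^ n dvd a"
proof
  assume "val_ge (int n) (Fract a 1)"
  then obtain c b where cb: "b \<noteq> 0" "\<not> p dvd b" "Fract a 1 = Fract c b * unif powi (int n)"
    by (rule val_geE)
  then have "Fract a 1 = Fract (c * p ^ n) b" by (simp add: power_Fract)
  then have "a * b = c * p ^ n" using cb by (simp add: eq_fract)
  then have "p ^ n dvd a * b" by simp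
  then show "p ^ n dvd a" using coprime_p_power[OF cb(2)] coprime_dvd_mult_left_iff by blast
next
  assume "p ^ n dvd a"
  then obtain c where "a = p ^ n * c" by (elim dvdE)
  then have "Fract a 1 = Fract c 1 * unif powi (int n)"
    by (simp add: unif_powi_nat mult.commute)
  then show "val_ge (int n) (Fract a 1)" by (intro val_geI[of 1]) (simp_all add: not_is_unit_p)
qed

lemma val_ge_1_poly_iff: "val_ge 1 (Fract u 1) \<longleftrightarrow> p dvd u"
  using val_ge_poly_iff[of 1 u] by simp

lemma val_ge_monomial: "val_ge k (Fract u 1 * unif powi k)"
  using val_ge_mult[OF val_ge_poly[of u] val_ge_unif_powi[of k]] by simp

lemma padic_small_iff_val_ge: "padic_small p M r \<longleftrightarrow> val_ge (int M) r"
proof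
  assume "padic_small p M r"
  then obtain a b where ab: "b \<noteq> 0" "coprime b p" "p ^ M dvd a" "r = Fract a b"
    unfolding padic_small_def by blast
  have "\<not> p dvd b" using ab(2) not_is_unit_p by (metis coprime_common_divisor dvd_refl)
  obtain c where "a = p ^ M * c" using ab(3) by (elim dvdE)
  then have "r = Fract c b * unif powi (int M)"
    using ab by (simp add: power_Fract mult.commute)
  then show "val_ge (int M) r" using \<open>\<not> p dvd b\<close> by (rule val_geI[rotated])
next
  assume "val_ge (int M) r"
  then obtain a b where ab: "b \<noteq> 0" "\<not> p dvd b" "r = Fract a b * unif powi (int M)"
    by (rule val_geE)
  have "r = Fract (a * p ^ M) b" using ab by (simp add: unif_powi_nat)
  moreover have "coprime b p"
    using prime_elem_imp_coprime[OF prime_elem_p ab(2)] by (simp add: coprime_commute)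
  ultimately show "padic_small p M r" unfolding padic_small_def
    using ab(1) by (intro exI[of _ "a * p ^ M"] exI[of _ b]) simp
qed

lemma val_ge_normal_form:
  assumes "r \<noteq> 0"
  shows "\<exists>u v k. \<not> p dvd u \<and> \<not> p dvd v \<and> r = Fract u v * unif powi k"
proof -
  obtain a b where ab: "r = Fract a b" "b \<noteq> 0" by (cases r)
  have "a \<noteq> 0" using ab assms by (auto simp: fract_collapse)
  obtain a1 where a1: "a = p ^ multiplicity p a * a1" "\<not> p dvd a1"
    by (rule multiplicity_decompose'[OF \<open>a \<noteq> 0\<close> not_is_unit_p])
  obtain b1 where b1: "b = p ^ multiplicity p b * b1" "\<not> p dvd b1"
    by (rule multiplicity_decompose'[OF ab(2) not_is_unit_p])
  have "unif powi (int (multiplicity p a) - int (multiplicity p b))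
      = Fract (p ^ multiplicity p a) (p ^ multiplicity p b)"
    by (simp add: power_int_diff power_Fract Fract_eq_0_iff)
  then have "Fract a1 b1 * unif powi (int (multiplicity p a) - int (multiplicity p b)) = Fract a b"
    using a1(1) b1(1) by (simp add: algebra_simps)
  then show ?thesis using a1(2) b1(2) ab(1) by metis
qed

lemma val_ge_unit_iff:
  assumes "\<not> p dvd u" "\<not> p dvd v"
  shows "val_ge j (Fract u v * unif powi k) \<longleftrightarrow> j \<le> k"
proof
  assume "val_ge j (Fract u v * unif powi k)"
  then have "val_ge (j - k) (Fract u v)"
    by (simp add: val_ge_mult_unif_powi_iff)
  moreover have "v \<noteq> 0" using assms(2) by auto
  then have "Fract u v * Fract v 1 = Fract u 1" by (simp add: eq_fract)
  ultimately have "val_ge (j - k) (Fract u 1)"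
    by (metis val_ge_mult_poly)
  then have "\<not> 1 \<le> j - k"
    using assms(1) val_ge_mono val_ge_1_poly_iff by metis
  then show "j \<le> k" by simp
next
  assume "j \<le> k"
  moreover have "val_ge k (Fract u v * unif powi k)"
    using val_ge_mult[OF val_ge_Fract[OF assms(2)] val_ge_unif_powi[of k]] by simp
  ultimately show "val_ge j (Fract u v * unif powi k)" using val_ge_mono by blast
qed

lemma val_ge_0_power2D: "val_ge 0 (r^2) \<Longrightarrow> val_ge 0 r"
proof (cases "r = 0")
  case False
  assume sq: "val_ge 0 (r^2)"
  obtain u v k where uvk: "\<not> p dvd u" "\<not> p dvd v" "r = Fract u v * unif powi k"
    using val_ge_normal_form[OF False] by blast
  have "r^2 = Fract (u * u) (v * v) * unif powi (2 * k)"
    using uvk(3) unif_powi_add[of k k] by (simp add: power2_eq_square mult_ac mult_2)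
  moreover have "\<not> p dvd u * u" "\<not> p dvd v * v" using uvk p_dvd_multD by blast+
  ultimately have "0 \<le> 2 * k" using sq val_ge_unit_iff by metis
  then show "val_ge 0 r" using val_ge_unit_iff[OF uvk(1,2)] uvk(3) by simp
qed simp

text \<open>Since \<open>p\<close> is separable, \<open>a\<^sup>2 + t b\<^sup>2\<close> with \<open>p \<nmid> b\<close> is never divisible by \<open>p\<^sup>2\<close>: its derivative is \<open>b\<^sup>2\<close>.\<close>

lemma not_val_ge_2_power2_plus_t: "\<not> val_ge 2 (r^2 + Fract tpoly 1)"
proof
  assume val2: "val_ge 2 (r^2 + Fract tpoly 1)"
  then have "val_ge 0 ((r^2 + Fract tpoly 1) + Fract tpoly 1)"
    using val_ge_add val_ge_poly val_ge_mono by (metis zero_le_numeral)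
  then have "val_ge 0 r" by (simp add: val_ge_0_power2D)
  then obtain a b where ab: "b \<noteq> 0" "\<not> p dvd b" "r = Fract a b * unif powi 0" by (rule val_geE)
  have "(r^2 + Fract tpoly 1) * Fract (b^2) 1 = Fract (a^2 + tpoly * b^2) 1"
    using ab by (simp add: power_Fract algebra_simps eq_fract power2_eq_square)
  then have "val_ge 2 (Fract (a^2 + tpoly * b^2) 1)"
    using val_ge_mult_poly[OF val2, of "b^2"] by (simp only:)
  then have "p^2 dvd a^2 + tpoly * b^2"
    using val_ge_poly_iff[of 2] by simp
  then obtain G where G: "a^2 + tpoly * b^2 = p^2 * G" by (elim dvdE)
  have "b^2 = p * (p * pderiv G)"
    using arg_cong[OF G, of pderiv] by (simp add: pderiv_add pderiv_mult power2_eq_square)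
  then show False using ab(2) p_dvd_powerD by (metis dvd_triv_left)
qed

definition residue :: "bit poly fract \<Rightarrow> bit poly" where
  "residue r = (SOME u. u \<in> digits \<and> val_ge 1 (r + Fract u 1))"

lemma residue_exists: "val_ge 0 r \<Longrightarrow> \<exists>u. u \<in> digits \<and> val_ge 1 (r + Fract u 1)"
proof -
  assume "val_ge 0 r"
  then obtain a b where ab: "b \<noteq> 0" "\<not> p dvd b" "r = Fract a b * unif powi 0" by (rule val_geE)
  have "coprime b p"
    using prime_elem_imp_coprime[OF prime_elem_p ab(2)] by (simp add: coprime_commute)
  then obtain S T where ST: "S * b + T * p = 1" using coprime_bezout_exists by blast
  define u where "u = (a * S) mod p"
  obtain m where m: "a * S + u = p * m"
    using mod_eq_iff_p_dvd_add[of "a * S" u] by (auto simp: u_def)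
  have ST': "S * b + 1 = T * p" using ST by (metis char2_bit_poly(4) add.commute)
  have "a + u * b = a * (S * b + 1) + (a * S + u) * b"
    by (simp add: algebra_simps)
  also have "\<dots> = a * (T * p) + (p * m) * b" by (simp only: ST' m)
  also have "\<dots> = p * (a * T + m * b)" by (simp add: algebra_simps)
  finally have "r + Fract u 1 = Fract (a * T + m * b) b * unif powi 1"
    using ab by (simp add: algebra_simps)
  then have "val_ge 1 (r + Fract u 1)" using ab(2) by (rule val_geI[rotated])
  then show ?thesis by (intro exI[of _ u]) (simp add: u_def)
qed

lemma residue: "val_ge 0 r \<Longrightarrow> residue r \<in> digits \<and> val_ge 1 (r + Fract (residue r) 1)"
  unfolding residue_def by (rule someI_ex, erule residue_exists)

lemma residue_eqI:
  assumes "u \<in> digits" "val_ge 0 r" "val_ge 1 (r + Fract u 1)"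
  shows "residue r = u"
proof -
  have "val_ge 1 ((r + Fract u 1) + (r + Fract (residue r) 1))"
    using assms residue by (blast intro: val_ge_add)
  then have "p dvd (u + residue r)" by (simp add: algebra_simps val_ge_1_poly_iff)
  then show ?thesis using digits_eq_if_p_dvd_add assms(1) residue[OF assms(2)] by metis
qed

lemma polar_part_exists: "\<exists>N n. val_ge 0 (r + Fract N (p ^ n))"
proof -
  obtain a b where ab: "r = Fract a b" "b \<noteq> 0" by (cases r)
  obtain b1 where b1: "b = p ^ multiplicity p b * b1" "\<not> p dvd b1"
    by (rule multiplicity_decompose'[OF ab(2) not_is_unit_p])
  define m where "m = multiplicity p b"
  have "coprime b1 (p ^ m)" using coprime_p_power[OF b1(2)] by (simp add: coprime_commute)
  then obtain S T where ST: "S * b1 + T * p ^ m = 1" using coprime_bezout_exists by blast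
  have "b1 \<noteq> 0" using b1 by auto
  then have "Fract (a * S) (p ^ m) + Fract (a * T) b1 = Fract (a * (S * b1 + T * p ^ m)) (p ^ m * b1)"
    by (simp add: algebra_simps)
  also have "\<dots> = r" using ST b1(1) ab(1) by (simp add: m_def)
  finally have "r + Fract (a * S) (p ^ m) = Fract (a * T) b1"
    by (metis char2_bit_poly_fract(4) add.commute)
  then show ?thesis using val_ge_Fract[OF b1(2)] by metis
qed

definition symb :: "bit poly fract \<Rightarrow> bool" where
  "symb r \<longleftrightarrow> (\<exists>N n. val_ge 0 (r + Fract N (p ^ n)) \<and> symb_frac N n)"

lemma Fract_p_power_add:
  "Fract N (p ^ n) + Fract M (p ^ m) = Fract (N * p ^ m + M * p ^ n) (p ^ (n + m))"
  by (simp add: power_add algebra_simps)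

lemma symb_frac_add_p_powers:
  "symb_frac (N * p ^ m + M * p ^ n) (n + m) \<longleftrightarrow> symb_frac N n \<noteq> symb_frac M m"
proof -
  have "symb_frac (M * p ^ n) (n + m) \<longleftrightarrow> symb_frac M m"
    using symb_frac_mult_p_power[of M n m] by (simp add: add.commute)
  then show ?thesis by (simp add: symb_frac_add symb_frac_mult_p_power)
qed

lemma symb_frac_well_defined:
  assumes "val_ge 0 (r + Fract N (p ^ n))" "val_ge 0 (r + Fract M (p ^ m))"
  shows "symb_frac N n \<longleftrightarrow> symb_frac M m"
proof -
  have "val_ge 0 (Fract N (p ^ n) + Fract M (p ^ m))"
    using val_ge_add[OF assms] by (simp add: algebra_simps)
  moreover have "Fract N (p ^ n) + Fract M (p ^ m) =
      Fract (N * p ^ m + M * p ^ n) 1 * unif powi (- int (n + m))"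
    unfolding unif_powi_neg_nat Fract_p_power_add by simp
  ultimately have "val_ge 0 (Fract (N * p ^ m + M * p ^ n) 1 * unif powi (- int (n + m)))"
    by simp
  then have "p ^ (n + m) dvd (N * p ^ m + M * p ^ n)"
    by (simp add: val_ge_mult_unif_powi_iff add.commute flip: val_ge_poly_iff)
  then have "\<not> symb_frac (N * p ^ m + M * p ^ n) (n + m)"
    using symb_frac_cong[of "n + m" _ 0] by simp
  then show ?thesis by (simp add: symb_frac_add_p_powers)
qed

lemma symb_eq_symb_frac: "val_ge 0 (r + Fract N (p ^ n)) \<Longrightarrow> symb r \<longleftrightarrow> symb_frac N n"
  unfolding symb_def using symb_frac_well_defined by blast

lemma symb_add: "symb (r + s) \<longleftrightarrow> symb r \<noteq> symb s"
proof -
  obtain N n where N: "val_ge 0 (r + Fract N (p ^ n))" using polar_part_exists by blast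
  obtain M m where M: "val_ge 0 (s + Fract M (p ^ m))" using polar_part_exists by blast
  have "val_ge 0 ((r + s) + Fract (N * p ^ m + M * p ^ n) (p ^ (n + m)))"
    using val_ge_add[OF N M] by (simp add: Fract_p_power_add algebra_simps)
  then have "symb (r + s) \<longleftrightarrow> symb_frac (N * p ^ m + M * p ^ n) (n + m)"
    by (rule symb_eq_symb_frac)
  then show ?thesis
    using symb_eq_symb_frac[OF N] symb_eq_symb_frac[OF M] by (simp add: symb_frac_add_p_powers)
qed

lemma not_symb_integral: "val_ge 0 r \<Longrightarrow> \<not> symb r"
  using symb_eq_symb_frac[of r 0 0] by (simp add: fract_collapse)

lemma symb_Fract_p_power: "symb (Fract N (p ^ n)) \<longleftrightarrow> symb_frac N n"
  by (rule symb_eq_symb_frac) simp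

lemma power2_add_Fract_p_power:
  "(r + Fract N (p ^ n))^2 = r^2 + Fract (N^2) (p ^ (2 * n))"
  by (simp add: power2_add_bit_poly_fract power_Fract power_mult mult.commute)

lemma symb_power2: "symb (r^2) \<longleftrightarrow> symb r"
proof -
  obtain N n where N: "val_ge 0 (r + Fract N (p ^ n))" using polar_part_exists by blast
  have "val_ge 0 ((r + Fract N (p ^ n))^2)"
    using val_ge_mult[OF N N] by (simp add: power2_eq_square)
  then have "symb (r^2) \<longleftrightarrow> symb_frac (N^2) (2 * n)"
    unfolding power2_add_Fract_p_power by (rule symb_eq_symb_frac)
  then show ?thesis using symb_eq_symb_frac[OF N] symb_frac_power2 by simp
qed

lemma not_symb_tpoly_power2: "\<not> symb (Fract tpoly 1 * r^2)"
proof -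
  obtain N n where N: "val_ge 0 (r + Fract N (p ^ n))" using polar_part_exists by blast
  have "val_ge 0 (Fract tpoly 1 * (r + Fract N (p ^ n))^2)"
    using val_ge_mult[OF val_ge_poly val_ge_mult[OF N N]] by (simp add: power2_eq_square)
  then have "symb (Fract tpoly 1 * r^2) \<longleftrightarrow> symb_frac (tpoly * N^2) (2 * n)"
    unfolding power2_add_Fract_p_power by (intro symb_eq_symb_frac) (simp add: distrib_left)
  then show ?thesis using symb_frac_tpoly_power2 by simp
qed

section \<open>Truncated \<open>p\<close>-adic expansions\<close>

lemma Kom_in_digits: "a \<in> Kom p \<Longrightarrow> a i \<in> digits"
  unfolding Kom_def digits_def by (metis (mono_tags, lifting) mem_Collect_eq)

lemma Kom_vanishes_below: "a \<in> Kom p \<Longrightarrow> \<exists>N. \<forall>i<N. a i = 0"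
  unfolding Kom_def by blast

lemma KomI: "(\<And>i. a i \<in> digits) \<Longrightarrow> \<forall>i<N. a i = 0 \<Longrightarrow> a \<in> Kom p"
  unfolding Kom_def digits_def by auto

lemma Kom_add: "a \<in> Kom p \<Longrightarrow> b \<in> Kom p \<Longrightarrow> (\<lambda>i. a i + b i) \<in> Kom p"
proof -
  assume a: "a \<in> Kom p" and b: "b \<in> Kom p"
  obtain N1 where "\<forall>i<N1. a i = 0" using Kom_vanishes_below[OF a] by blast
  moreover obtain N2 where "\<forall>i<N2. b i = 0" using Kom_vanishes_below[OF b] by blast
  ultimately show ?thesis
    using Kom_in_digits[OF a] Kom_in_digits[OF b] by (intro KomI[of _ "min N1 N2"]) simp_all
qed

lemma Kom_single: "u \<in> digits \<Longrightarrow> (\<lambda>i. if i = k then u else 0) \<in> Kom p"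
  by (rule KomI[of _ k]) auto

lemma Kom_least_nonzero:
  assumes a: "a \<in> Kom p" and nz: "a \<noteq> (\<lambda>_. 0)"
  shows "\<exists>k. a k \<noteq> 0 \<and> (\<forall>j<k. a j = 0)"
proof -
  obtain N where N: "\<forall>i<N. a i = 0" using Kom_vanishes_below[OF a] by blast
  obtain i where i: "a i \<noteq> 0" using nz by auto
  then have "N \<le> i" using N by (meson not_less)
  define m where "m = (LEAST m::nat. a (N + int m) \<noteq> 0)"
  have "a (N + int (nat (i - N))) \<noteq> 0" using i \<open>N \<le> i\<close> by simp
  then have "a (N + int m) \<noteq> 0" unfolding m_def by (rule LeastI)
  moreover have "a j = 0" if "j < N + int m" for j
  proof (cases "j < N")
    case False
    then have "nat (j - N) < m" using that by simp
    then have "\<not> a (N + int (nat (j - N))) \<noteq> 0" unfolding m_def by (rule not_less_Least)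
    then show ?thesis using False by simp
  qed (use N in simp)
  ultimately show ?thesis by blast
qed

lemma psum_eq_sum_interval:
  assumes "\<forall>i<N. a i = 0"
  shows "psum p a n = (\<Sum>i\<in>{N..<n}. Fract (a i) 1 * unif powi i)"
  unfolding psum_def
proof (rule sum.mono_neutral_left)
  show "{i. i < n \<and> a i \<noteq> 0} \<subseteq> {N..<n}"
    using assms by (auto simp: not_less[symmetric])
qed (auto simp: fract_collapse)

lemma psum_eq_0_below: "\<forall>i<N. a i = 0 \<Longrightarrow> n \<le> N \<Longrightarrow> psum p a n = 0"
  using psum_eq_sum_interval[of N a n] by simp

lemma psum_cong: "\<forall>i<n. y i = z i \<Longrightarrow> psum p y n = psum p z n"
  unfolding psum_def by (rule sum.cong) auto

lemma psum_add_1: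
  assumes "a \<in> Kom p"
  shows "psum p a (n + 1) = psum p a n + Fract (a n) 1 * unif powi n"
proof -
  obtain N where N: "\<forall>i<N. a i = 0" using Kom_vanishes_below[OF assms] by blast
  show ?thesis
  proof (cases "n < N")
    case True
    then show ?thesis using N psum_eq_0_below[OF N] by (simp add: fract_collapse)
  next
    case False
    then have "{N..<n + 1} = insert n {N..<n}" by auto
    then show ?thesis by (simp add: psum_eq_sum_interval[OF N] add.commute)
  qed
qed

lemma psum_add:
  assumes "a \<in> Kom p" "b \<in> Kom p"
  shows "psum p (\<lambda>i. a i + b i) n = psum p a n + psum p b n"
proof -
  obtain N1 where "\<forall>i<N1. a i = 0" using Kom_vanishes_below[OF assms(1)] by blast
  moreover obtain N2 where "\<forall>i<N2. b i = 0" using Kom_vanishes_below[OF assms(2)] by blast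
  ultimately have "\<forall>i<min N1 N2. a i = 0" "\<forall>i<min N1 N2. b i = 0" "\<forall>i<min N1 N2. a i + b i = 0"
    by auto
  then show ?thesis
    by (simp only: psum_eq_sum_interval) (simp add: sum.distrib[symmetric] flip: distrib_right)
qed

lemma psum_single:
  assumes "u \<in> digits" "k < n"
  shows "psum p (\<lambda>i. if i = k then u else 0) n = Fract u 1 * unif powi k"
  using assms(2)
proof (induction n rule: int_gr_induct)
  case base
  show ?case
    using psum_add_1[OF Kom_single[OF assms(1), of k], of k] psum_eq_0_below[of k _ k] by simp
next
  case (step n)
  then show ?case
    using psum_add_1[OF Kom_single[OF assms(1), of k], of n] by (simp add: fract_collapse)
qed

lemma val_ge_psum_diff:
  assumes "a \<in> Kom p" "n \<le> m" shows "val_ge n (psum p a m + psum p a n)"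
  using assms(2)
proof (induction m rule: int_ge_induct)
  case (step m)
  have "psum p a (m + 1) + psum p a n = (psum p a m + psum p a n) + Fract (a m) 1 * unif powi m"
    using psum_add_1[OF assms(1), of m] by (simp add: ac_simps)
  moreover have "val_ge n (Fract (a m) 1 * unif powi m)"
    using val_ge_monomial step(1) by (rule val_ge_mono)
  ultimately show ?case using val_ge_add[OF step(2)] by metis
qed simp

lemma psum_leading_term:
  assumes a: "a \<in> Kom p" and k: "a k \<noteq> 0" "\<forall>j<k. a j = 0" and n: "k < n"
  shows "\<exists>u. \<not> p dvd u \<and> psum p a n = Fract u 1 * unif powi k"
  using n
proof (induction n rule: int_gr_induct)
  case base
  have "\<not> p dvd a k" using digit_eq_0_if_p_dvd[OF Kom_in_digits[OF a]] k(1) by blast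
  moreover have "psum p a (k + 1) = Fract (a k) 1 * unif powi k"
    using psum_add_1[OF a, of k] psum_eq_0_below[OF k(2), of k] by simp
  ultimately show ?case by blast
next
  case (step m)
  then obtain u where u: "\<not> p dvd u" "psum p a m = Fract u 1 * unif powi k" by blast
  define j where "j = nat (m - k)"
  have j: "j \<ge> 1" "m = k + int j" using step(1) by (auto simp: j_def)
  have "unif powi m = Fract (p ^ j) 1 * unif powi k"
    using unif_powi_add[of k "int j"] by (simp add: j(2) mult.commute)
  then have "psum p a (m + 1) = Fract u 1 * unif powi k + Fract (a m) 1 * (Fract (p ^ j) 1 * unif powi k)"
    by (simp only: psum_add_1[OF a] u(2))
  also have "\<dots> = Fract (u + a m * p ^ j) 1 * unif powi k"
    by (simp only: distrib_right mult.assoc flip: Fract_mult_1 Fract_add_1)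
  finally have "psum p a (m + 1) = Fract (u + a m * p ^ j) 1 * unif powi k" .
  moreover have "\<not> p dvd (u + a m * p ^ j)"
  proof -
    have "p dvd a m * p ^ j" using j(1) by (simp add: dvd_power)
    then show ?thesis using u(1) by (simp add: dvd_add_left_iff)
  qed
  ultimately show ?case by blast
qed

lemma exists_truncation_leading_monomial:
  assumes x: "x \<in> Kom p" "x \<noteq> (\<lambda>_. 0)"
    and small: "\<forall>M. \<forall>\<^sub>F n in sequentially. padic_small p M (f n)"
  shows "\<exists>k n u. psum p x (int n) = Fract u 1 * unif powi k \<and> \<not> p dvd u \<and> val_ge (j k) (f n)"
proof -
  obtain k where k: "x k \<noteq> 0" "\<forall>i<k. x i = 0" using Kom_least_nonzero[OF x] by blast
  obtain N where N: "\<forall>n\<ge>N. val_ge (int (nat (j k))) (f n)"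
    using small[rule_format, of "nat (j k)"] by (auto simp: eventually_sequentially padic_small_iff_val_ge)
  define n where "n = max N (nat (k + 1))"
  have "val_ge (j k) (f n)" using N val_ge_mono[of "int (nat (j k))" "f n" "j k"] by (simp add: n_def)
  moreover have "k < int n" by (simp add: n_def)
  then obtain u where "\<not> p dvd u" "psum p x (int n) = Fract u 1 * unif powi k"
    using psum_leading_term[OF x(1) k] by blast
  ultimately show ?thesis by blast
qed

lemma symb_psum:
  assumes "y \<in> Kom p" "0 \<le> n" shows "symb (psum p y n) \<longleftrightarrow> symb (psum p y 0)"
proof -
  have "\<not> symb (psum p y n + psum p y 0)"
    using val_ge_psum_diff[OF assms] by (rule not_symb_integral)
  then show ?thesis by (simp add: symb_add)
qed

section \<open>Points on the conic\<close>

lemma val_ge_divide_monomial_power2: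
  assumes u: "\<not> p dvd u" and Q: "val_ge (j + 2 * k) Q"
  shows "val_ge j (Q / (Fract u 1 * unif powi k)^2)"
proof -
  define D where "D = Fract u 1 * unif powi k"
  define D' where "D' = Fract 1 u * unif powi (- k)"
  have "u \<noteq> 0" using u by auto
  have "D * D' = (Fract u 1 * Fract 1 u) * (unif powi k * unif powi (- k))"
    unfolding D_def D'_def by (simp only: mult_ac)
  also have "\<dots> = 1"
    using \<open>u \<noteq> 0\<close> by (simp add: eq_fract One_fract_def power_int_minus Fract_eq_0_iff)
  finally have "Q / D^2 = Q * D' * D'"
    by (simp add: divide_inverse power2_eq_square inverse_unique mult.assoc)
  moreover have "val_ge (- k) D'"
    unfolding D'_def using val_ge_mult[OF val_ge_Fract[OF u] val_ge_unif_powi] by simp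
  ultimately show ?thesis
    using val_ge_mult[OF val_ge_mult[OF Q]] unfolding D_def by fastforce
qed

lemma conic_trunc_eq:
  "conic_trunc p y x0 x1 x2 n =
     (psum p x0 (int n))^2 + psum p x0 (int n) * psum p x1 (int n)
     + psum p y (int n) * (psum p x1 (int n))^2 + Fract tpoly 1 * (psum p x2 (int n))^2"
  unfolding conic_trunc_def by simp

lemma psum_zero [simp]: "psum p (\<lambda>_. 0) n = 0"
  by (simp add: psum_def)

text \<open>The three cases of a point, according to which of \<open>x\<^sub>1\<close>, \<open>x\<^sub>2\<close>, \<open>x\<^sub>0\<close> is the first nonzero
  coordinate; \<open>D\<close>, \<open>E\<close> is the leading monomial of that coordinate in a deep truncation.\<close>

lemma not_symb_if_x1_leading:
  assumes D: "D = Fract u 1 * unif powi k" "\<not> p dvd u"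
    and small: "val_ge (2 * k) (X0^2 + X0 * D + Y * D^2 + Fract tpoly 1 * X2^2)"
  shows "\<not> symb Y"
proof -
  have "D \<noteq> 0" using D by (auto simp: Fract_eq_0_iff)
  define Q c e where "Q = X0^2 + X0 * D + Y * D^2 + Fract tpoly 1 * X2^2"
    and "c = X0 / D" and "e = X2 / D"
  have "Y = Q / D^2 + (c^2 + c) + Fract tpoly 1 * e^2"
    using \<open>D \<noteq> 0\<close> unfolding Q_def c_def e_def by (simp add: field_simps power2_eq_square)
  moreover have "\<not> symb (Q / D^2)"
    using val_ge_divide_monomial_power2[OF D(2), of 0 k Q] small D(1) Q_def
    by (simp add: not_symb_integral)
  ultimately show ?thesis by (simp add: symb_add symb_power2 not_symb_tpoly_power2)
qed

lemma not_val_ge_if_x2_leading: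
  assumes E: "E = Fract u 1 * unif powi k" "\<not> p dvd u"
  shows "\<not> val_ge (2 + 2 * k) (X0^2 + Fract tpoly 1 * E^2)"
proof
  assume "val_ge (2 + 2 * k) (X0^2 + Fract tpoly 1 * E^2)"
  from val_ge_divide_monomial_power2[OF E(2) this]
  have "val_ge 2 ((X0^2 + Fract tpoly 1 * E^2) / E^2)" by (simp only: E(1))
  moreover have "E \<noteq> 0" using E by (auto simp: Fract_eq_0_iff)
  then have "(X0^2 + Fract tpoly 1 * E^2) / E^2 = (X0 / E)^2 + Fract tpoly 1"
    by (simp add: field_simps power2_eq_square)
  ultimately show False using not_val_ge_2_power2_plus_t by simp
qed

lemma not_val_ge_if_x0_leading:
  assumes "\<not> p dvd u"
  shows "\<not> val_ge (2 * k + 1) ((Fract u 1 * unif powi k)^2)"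
proof -
  have "(Fract u 1 * unif powi k)^2 = Fract (u * u) 1 * unif powi (2 * k)"
    using unif_powi_add[of k k] by (simp add: power2_eq_square mult_ac mult_2)
  moreover have "\<not> p dvd u * u" using assms p_dvd_multD by blast
  ultimately show ?thesis using val_ge_unit_iff[of "u * u" 1] by (simp add: not_is_unit_p)
qed

theorem not_symb_if_conic_has_point:
  assumes y: "y \<in> Kom p" and point: "conic_has_point p y"
  shows "\<not> symb (psum p y 0)"
proof -
  obtain x0 x1 x2 where xs: "x0 \<in> Kom p" "x1 \<in> Kom p" "x2 \<in> Kom p"
    and nontriv: "\<not> (x0 = (\<lambda>_. 0) \<and> x1 = (\<lambda>_. 0) \<and> x2 = (\<lambda>_. 0))"
    and small: "\<forall>M. \<forall>\<^sub>F n in sequentially. padic_small p M (conic_trunc p y x0 x1 x2 n)"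
    using point unfolding conic_has_point_def by blast
  consider "x1 \<noteq> (\<lambda>_. 0)" | "x1 = (\<lambda>_. 0)" "x2 \<noteq> (\<lambda>_. 0)"
    | "x1 = (\<lambda>_. 0)" "x2 = (\<lambda>_. 0)" "x0 \<noteq> (\<lambda>_. 0)"
    using nontriv by blast
  then show ?thesis
  proof cases
    case 1
    obtain k n u where lead: "psum p x1 (int n) = Fract u 1 * unif powi k" "\<not> p dvd u"
      and small_n: "val_ge (2 * k) (conic_trunc p y x0 x1 x2 n)"
      using exists_truncation_leading_monomial[OF xs(2) 1 small, of "\<lambda>k. 2 * k"] by blast
    have "\<not> symb (psum p y (int n))"
      using small_n unfolding conic_trunc_eq by (rule not_symb_if_x1_leading[OF lead])
    then show ?thesis using symb_psum[OF y, of "int n"] by simp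
  next
    case 2
    obtain k n u where lead: "psum p x2 (int n) = Fract u 1 * unif powi k" "\<not> p dvd u"
      and "val_ge (2 + 2 * k) (conic_trunc p y x0 x1 x2 n)"
      using exists_truncation_leading_monomial[OF xs(3) 2(2) small, of "\<lambda>k. 2 + 2 * k"] by blast
    then show ?thesis
      using not_val_ge_if_x2_leading[OF lead] unfolding conic_trunc_eq 2(1) by simp
  next
    case 3
    obtain k n u where lead: "psum p x0 (int n) = Fract u 1 * unif powi k" "\<not> p dvd u"
      and "val_ge (2 * k + 1) (conic_trunc p y x0 x1 x2 n)"
      using exists_truncation_leading_monomial[OF xs(1) 3(3) small, of "\<lambda>k. 2 * k + 1"] by blast
    then show ?thesis
      using not_val_ge_if_x0_leading[OF lead(2)] unfolding conic_trunc_eq 3(1,2) lead(1) by simp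
  qed
qed

definition p_frac :: "bit poly fract \<Rightarrow> bool" where
  "p_frac x \<longleftrightarrow> (\<exists>A m. x = Fract A (p ^ m))"

lemma p_frac_add: "p_frac x \<Longrightarrow> p_frac y \<Longrightarrow> p_frac (x + y)"
  unfolding p_frac_def by (metis Fract_p_power_add)

text \<open>In characteristic 2 this says \<open>r \<equiv> a\<^sup>2 + a + t b\<^sup>2\<close> modulo \<open>\<O>\<^sub>\<omega>\<close>: \<open>(a, 1, b)\<close> solves
  the conic for \<open>y = r\<close> up to an integral error.\<close>

definition norm_mod_O :: "bit poly fract \<Rightarrow> bool" where
  "norm_mod_O r \<longleftrightarrow>
     (\<exists>a b. p_frac a \<and> p_frac b \<and> val_ge 0 (r + a^2 + a + Fract tpoly 1 * b^2))"

lemma norm_mod_O_cong: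
  assumes "val_ge 0 (r + s)" "norm_mod_O s" shows "norm_mod_O r"
proof -
  obtain a b where ab: "p_frac a" "p_frac b" "val_ge 0 (s + a^2 + a + Fract tpoly 1 * b^2)"
    using assms(2) unfolding norm_mod_O_def by blast
  have "val_ge 0 ((r + s) + (s + a^2 + a + Fract tpoly 1 * b^2))"
    using assms(1) ab(3) by (rule val_ge_add)
  then show ?thesis unfolding norm_mod_O_def using ab(1,2) by (auto simp: algebra_simps)
qed

lemma norm_mod_O_simple_pole:
  assumes "\<not> symb1 N" shows "norm_mod_O (Fract N p)"
proof -
  obtain v where v: "v \<in> digits" "N mod p = triv_map v"
    using assms by (auto simp: symb1_def triv_digits_def)
  define C D where "C = sqrt_even (v * p)" and "D = sqrt_odd (v * p)"
  have "(Fract C p)^2 + Fract tpoly 1 * (Fract D p)^2 = Fract (C^2 + tpoly * D^2) (p^2)"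
    by (simp only: power_Fract mult_fract mult_1 Fract_add_same_denom[OF power_not_zero[OF p_nonzero]])
  also have "C^2 + tpoly * D^2 = v * p"
    unfolding C_def D_def by (rule even_odd_decomp[symmetric])
  finally have "(Fract C p)^2 + Fract tpoly 1 * (Fract D p)^2 = Fract v p"
    by (simp add: eq_fract power2_eq_square)
  moreover obtain k where "N + (v + C) = p * k"
    using v by (metis triv_map_def C_def mod_eq_iff_p_dvd_add mod_mod_trivial dvdE)
  then have "Fract N p + Fract v p + Fract C p = Fract k 1"
    by (simp only: Fract_add_same_denom[OF p_nonzero] add.assoc) (simp add: eq_fract)
  ultimately have "val_ge 0 (Fract N p + (Fract C p)^2 + Fract C p + Fract tpoly 1 * (Fract D p)^2)"
    by (simp add: algebra_simps)
  moreover have "p_frac (Fract C p)" "p_frac (Fract D p)"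
    unfolding p_frac_def by (metis power_one_right)+
  ultimately show ?thesis unfolding norm_mod_O_def by blast
qed

lemma norm_mod_O_double:
  assumes "norm_mod_O (Fract (sqrt_even M) (p ^ m))"
  shows "norm_mod_O (Fract M (p ^ (2 * m)))"
proof -
  define a1 b1 where "a1 = Fract (sqrt_even M) (p ^ m)" and "b1 = Fract (sqrt_odd M) (p ^ m)"
  obtain a2 b2 where ab2: "p_frac a2" "p_frac b2" "val_ge 0 (a1 + a2^2 + a2 + Fract tpoly 1 * b2^2)"
    using assms unfolding norm_mod_O_def a1_def by blast
  have "a1^2 + Fract tpoly 1 * b1^2 = Fract ((sqrt_even M)^2 + tpoly * (sqrt_odd M)^2) ((p ^ m)^2)"
    unfolding a1_def b1_def
    by (simp only: power_Fract mult_fract mult_1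
        Fract_add_same_denom[OF power_not_zero[OF power_not_zero[OF p_nonzero]]])
  also have "(sqrt_even M)^2 + tpoly * (sqrt_odd M)^2 = M"
    by (rule even_odd_decomp[symmetric])
  also have "(p ^ m)^2 = p ^ (2 * m)"
    by (simp add: power_mult[symmetric] mult.commute)
  finally have sq_sum: "a1^2 + Fract tpoly 1 * b1^2 = Fract M (p ^ (2 * m))" .
  then have "Fract M (p ^ (2 * m)) + (a1 + a2)^2 + (a1 + a2) + Fract tpoly 1 * (b1 + b2)^2
      = a1 + a2^2 + a2 + Fract tpoly 1 * b2^2"
    unfolding sq_sum[symmetric] by (simp add: power2_add_bit_poly_fract algebra_simps)
  moreover have "p_frac (a1 + a2)" "p_frac (b1 + b2)"
    using ab2(1,2) p_frac_add unfolding a1_def b1_def p_frac_def by blast+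
  ultimately show ?thesis unfolding norm_mod_O_def using ab2(3) by metis
qed

lemma norm_mod_O_if_not_symb_frac: "\<not> symb_frac N n \<Longrightarrow> norm_mod_O (Fract N (p ^ n))"
proof (induction N n rule: symb_frac.induct)
  case (1 N)
  show ?case unfolding norm_mod_O_def p_frac_def
    by (rule exI[of _ 0], rule exI[of _ 0]) (auto intro: exI[of _ 0] simp: fract_collapse)
next
  case (2 N)
  then show ?case using norm_mod_O_simple_pole by simp
next
  case (3 N n)
  show ?case
  proof (cases "even n")
    case True
    have "\<not> symb_frac (sqrt_even N) (Suc (n div 2))" using 3(3) True by simp
    then have "norm_mod_O (Fract N (p ^ (2 * Suc (n div 2))))"
      by (intro norm_mod_O_double 3(1)[OF True])
    moreover have "2 * Suc (n div 2) = Suc (Suc n)" using True by simp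
    ultimately show ?thesis by (simp only:)
  next
    case False
    have "\<not> symb_frac (sqrt_even (N * p)) (Suc (Suc (n div 2)))" using 3(3) False by simp
    then have "norm_mod_O (Fract (N * p) (p ^ (2 * Suc (Suc (n div 2)))))"
      by (intro norm_mod_O_double 3(2)[OF False])
    moreover have "2 * Suc (Suc (n div 2)) = Suc (Suc (Suc n))" using False by presburger
    moreover have "Fract (N * p) (p ^ Suc (Suc (Suc n))) = Fract N (p ^ Suc (Suc n))"
      by (simp add: eq_fract algebra_simps)
    ultimately show ?thesis by (simp only:)
  qed
qed

lemma norm_mod_O_if_not_symb: "\<not> symb r \<Longrightarrow> norm_mod_O r"
  using polar_part_exists[of r] symb_eq_symb_frac norm_mod_O_if_not_symb_frac norm_mod_O_cong
  by blast

definition pdigit :: "bit poly \<Rightarrow> nat \<Rightarrow> bit poly" where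
  "pdigit A k = (A div p ^ k) mod p"

lemma poly_p_expansion: "A = (\<Sum>k<K. pdigit A k * p ^ k) + (A div p ^ K) * p ^ K"
proof (induction K)
  case (Suc K)
  have "A div p ^ K = (A div p ^ Suc K) * p + pdigit A K"
    by (simp only: pdigit_def power_Suc2 poly_div_mult_right div_mult_mod_eq)
  then show ?case using Suc by (simp add: algebra_simps power_Suc2)
qed simp

lemma poly_p_expansion_finite: "degree A < K \<Longrightarrow> A = (\<Sum>k<K. pdigit A k * p ^ k)"
proof -
  assume "degree A < K"
  moreover have "K \<le> degree (p ^ K)" using degree_p_pos by (simp add: degree_power_eq)
  ultimately have "A div p ^ K = 0" by (intro div_poly_less) simp
  then show ?thesis using poly_p_expansion[of A K] by simp
qed

definition frac_digits :: "bit poly \<Rightarrow> nat \<Rightarrow> int \<Rightarrow> bit poly" where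
  "frac_digits A m i = (if - int m \<le> i then pdigit A (nat (i + int m)) else 0)"

lemma frac_digits_Kom: "frac_digits A m \<in> Kom p"
  by (rule KomI[of _ "- int m"]) (auto simp: frac_digits_def pdigit_def)

lemma psum_frac_digits:
  "psum p (frac_digits A m) (int K - int m) = Fract (\<Sum>k<K. pdigit A k * p ^ k) 1 * unif powi (- int m)"
proof (induction K)
  case 0
  have "psum p (frac_digits A m) (- int m) = 0"
    by (rule psum_eq_0_below[of "- int m"]) (auto simp: frac_digits_def)
  then show ?case by (simp add: fract_collapse)
next
  case (Suc K)
  have "unif powi (int K - int m) = Fract (p ^ K) 1 * unif powi (- int m)"
    using unif_powi_add[of "int K" "- int m"] by simp
  moreover have "frac_digits A m (int K - int m) = pdigit A K"
    by (simp add: frac_digits_def)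
  moreover have "int (Suc K) - int m = (int K - int m) + 1" by simp
  ultimately have "psum p (frac_digits A m) (int (Suc K) - int m) =
      Fract (\<Sum>k<K. pdigit A k * p ^ k) 1 * unif powi (- int m)
      + Fract (pdigit A K) 1 * (Fract (p ^ K) 1 * unif powi (- int m))"
    by (simp only: psum_add_1[OF frac_digits_Kom] Suc.IH)
  also have "\<dots> = Fract (\<Sum>k<Suc K. pdigit A k * p ^ k) 1 * unif powi (- int m)"
    by (simp only: sum.lessThan_Suc distrib_right mult.assoc flip: Fract_mult_1 Fract_add_1)
  finally show ?case .
qed

lemma p_frac_digits:
  assumes "p_frac x" shows "\<exists>s\<in>Kom p. \<exists>n0. \<forall>n\<ge>n0. psum p s n = x"
proof -
  obtain A m where x: "x = Fract A (p ^ m)" using assms unfolding p_frac_def by blast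
  have "psum p (frac_digits A m) n = x" if "int (Suc (degree A)) - int m \<le> n" for n
  proof -
    define K where "K = nat (n + int m)"
    have K: "n = int K - int m" "degree A < K" using that by (auto simp: K_def)
    show ?thesis
      unfolding K(1) psum_frac_digits poly_p_expansion_finite[OF K(2), symmetric]
      by (simp add: x unif_powi_neg_nat)
  qed
  then show ?thesis using frac_digits_Kom by blast
qed

text \<open>Since \<open>z\<^sup>2 + z\<close> has derivative \<open>1\<close>, each step corrects one more \<open>p\<close>-adic digit of the root.
  The right-hand side \<open>V k\<close> may itself vary with the precision \<open>k\<close>.\<close>

fun as_root :: "(nat \<Rightarrow> bit poly fract) \<Rightarrow> nat \<Rightarrow> bit poly" where
  "as_root V 0 = 0"
| "as_root V (Suc k) = as_root V k +
     (residue (((Fract (as_root V k) 1)^2 + Fract (as_root V k) 1 + V (Suc k)) * unif powi (- int k))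
        mod p) * p ^ k"

definition as_digit :: "(nat \<Rightarrow> bit poly fract) \<Rightarrow> nat \<Rightarrow> bit poly" where
  "as_digit V k =
     residue (((Fract (as_root V k) 1)^2 + Fract (as_root V k) 1 + V (Suc k)) * unif powi (- int k)) mod p"

lemma as_root_Suc: "as_root V (Suc k) = as_root V k + as_digit V k * p ^ k"
  by (simp add: as_digit_def)

declare as_root.simps(2) [simp del]

lemma hensel_as_root:
  assumes V1: "val_ge 1 (V 1)" and V_step: "\<And>k. 1 \<le> k \<Longrightarrow> val_ge (int k) (V (Suc k) + V k)"
  shows "1 \<le> k \<Longrightarrow> val_ge (int k) ((Fract (as_root V k) 1)^2 + Fract (as_root V k) 1 + V k)"
proof (induction k rule: nat_induct_at_least)
  case base
  have "residue (V 1) = 0"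
    using V1 val_ge_mono[OF V1] by (intro residue_eqI) (simp_all add: fract_collapse)
  then have "as_root V 1 = 0" by (simp add: as_root_Suc as_digit_def)
  then show ?case using V1 by (simp add: fract_collapse)
next
  case (Suc k)
  define Z E T where "Z = Fract (as_root V k) 1" and "E = Z^2 + Z + V (Suc k)"
    and "T = Fract (as_digit V k) 1 * unif powi (int k)"
  have "E = (Z^2 + Z + V k) + (V (Suc k) + V k)" unfolding E_def by (simp add: algebra_simps)
  then have "val_ge (int k) E"
    using val_ge_add[OF Suc.IH[folded Z_def] V_step[OF Suc.hyps]] by simp
  then have "val_ge 0 (E * unif powi (- int k))"
    using val_ge_mult_unif_powi_iff by simp
  from residue[OF this] have "val_ge 1 (E * unif powi (- int k) + Fract (as_digit V k) 1)"
    unfolding as_digit_def E_def Z_def by simp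
  from val_ge_mult[OF this val_ge_unif_powi[of "int k"]]
  have "val_ge (1 + int k) ((E * unif powi (- int k) + Fract (as_digit V k) 1) * unif powi (int k))" .
  moreover have "unif powi (- int k) * unif powi (int k) = 1"
    using unif_powi_add[of "- int k" "int k"] by simp
  then have "(E * unif powi (- int k) + Fract (as_digit V k) 1) * unif powi (int k) = E + T"
    unfolding T_def by (simp only: distrib_right mult.assoc mult_1_right)
  ultimately have "val_ge (1 + int k) (E + T)" by simp
  moreover have "val_ge (int k + int k) (T * T)"
    unfolding T_def by (rule val_ge_mult[OF val_ge_monomial val_ge_monomial])
  then have "val_ge (1 + int k) (T * T)"
    using Suc.hyps by (elim val_ge_mono) simp
  moreover have "Fract (as_root V (Suc k)) 1 = Z + T"
    unfolding as_root_Suc Z_def T_def by simp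
  then have "(Fract (as_root V (Suc k)) 1)^2 + Fract (as_root V (Suc k)) 1 + V (Suc k) = (E + T) + T * T"
    unfolding E_def by (simp add: power2_add_bit_poly_fract power2_eq_square algebra_simps)
  ultimately show ?case by (simp add: val_ge_add)
qed

lemma hensel_root_digits:
  assumes "val_ge 1 (V 1)" "\<And>k. 1 \<le> k \<Longrightarrow> val_ge (int k) (V (Suc k) + V k)"
  shows "\<exists>z\<in>Kom p. \<forall>n\<ge>1. val_ge (int n) ((psum p z (int n))^2 + psum p z (int n) + V n)"
proof -
  define z where "z i = (if 0 \<le> i then as_digit V (nat i) else 0)" for i :: int
  have z: "z \<in> Kom p" by (rule KomI[of _ 0]) (auto simp: z_def as_digit_def)
  have psum_z: "psum p z (int n) = Fract (as_root V n) 1" for n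
  proof (induction n)
    case 0
    have "\<forall>i<0. z i = 0" by (simp add: z_def)
    then show ?case using psum_eq_0_below[of 0 z 0] by (simp add: fract_collapse)
  next
    case (Suc n)
    have "z (int n) = as_digit V n" by (simp add: z_def)
    then show ?case
      using Suc.IH psum_add_1[OF z, of "int n"] by (simp add: as_root_Suc add.commute)
  qed
  show ?thesis
  proof (intro bexI[OF _ z] allI impI)
    fix n :: nat assume "1 \<le> n"
    then show "val_ge (int n) ((psum p z (int n))^2 + psum p z (int n) + V n)"
      using hensel_as_root[OF assms] by (simp add: psum_z)
  qed
qed

lemma exists_t_square_cong: "c \<in> digits \<Longrightarrow> \<exists>e\<in>digits. p dvd tpoly * e^2 + c"
proof -
  assume c: "c \<in> digits"
  define f where "f e = (tpoly * e^2) mod p" for e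
  have "inj_on f digits"
  proof (rule inj_onI)
    fix e e' assume e: "e \<in> digits" "e' \<in> digits" "f e = f e'"
    then have "p dvd tpoly * (e + e')^2"
      by (simp add: f_def mod_eq_iff_p_dvd_add power2_add_bit_poly distrib_left)
    then have "p dvd e + e'" using p_dvd_multD not_p_dvd_tpoly p_dvd_powerD by blast
    then show "e = e'" using digits_eq_if_p_dvd_add e by blast
  qed
  moreover have "f ` digits \<subseteq> digits" by (auto simp: f_def)
  ultimately have "f ` digits = digits"
    using endo_inj_surj[OF finite_digits] by blast
  then obtain e where "e \<in> digits" "(tpoly * e^2) mod p = c mod p"
    using c by (metis f_def imageE mod_digit)
  then show ?thesis by (auto simp: mod_eq_iff_p_dvd_add)
qed

lemma conic_has_pointI:
  assumes "x0 \<in> Kom p" "x1 \<in> Kom p" "x2 \<in> Kom p" "x1 \<noteq> (\<lambda>_. 0)"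
    and "\<And>M. \<exists>N. \<forall>n\<ge>N. val_ge (int M) (conic_trunc p y x0 x1 x2 n)"
  shows "conic_has_point p y"
  unfolding conic_has_point_def
  using assms by (auto simp: eventually_sequentially padic_small_iff_val_ge)

text \<open>If \<open>r\<close> cancels the polar part of \<open>y\<close>, a root \<open>z\<close> of \<open>z\<^sup>2 + z + r + y + t e\<^sup>2\<close> exists for a suitable
  digit \<open>e\<close>: modulo \<open>p\<close> the constant term is killed by \<open>t e\<^sup>2\<close>, then Hensel lifting applies.\<close>

lemma exists_root_mod_truncations:
  assumes y: "y \<in> Kom p" and r: "val_ge 0 (psum p y 0 + r)"
  shows "\<exists>z\<in>Kom p. \<exists>e\<in>digits. \<forall>n\<ge>1. val_ge (int n)
           ((psum p z (int n))^2 + psum p z (int n) + r + psum p y (int n) + Fract tpoly 1 * (Fract e 1)^2)"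
proof -
  define c where "c = residue (psum p y 0 + r + Fract (y 0) 1)"
  have "val_ge 0 (psum p y 0 + r + Fract (y 0) 1)" using r by (simp add: val_ge_add)
  from residue[OF this] have c: "c \<in> digits" "val_ge 1 (psum p y 0 + r + Fract (y 0) 1 + Fract c 1)"
    unfolding c_def by simp_all
  obtain e where e: "e \<in> digits" "p dvd tpoly * e^2 + c"
    using exists_t_square_cong[OF c(1)] by blast
  define V where "V n = r + psum p y (int n) + Fract tpoly 1 * (Fract e 1)^2" for n
  have "V 1 = (psum p y 0 + r + Fract (y 0) 1 + Fract c 1) + Fract (tpoly * e^2 + c) 1"
    using psum_add_1[OF y, of 0] by (simp add: V_def algebra_simps)
  then have V1: "val_ge 1 (V 1)"
    using c(2) e(2) by (simp add: val_ge_add val_ge_1_poly_iff)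
  have "V (Suc k) + V k = Fract (y (int k)) 1 * unif powi (int k)" for k
    using psum_add_1[OF y, of "int k"] by (simp add: V_def algebra_simps)
  then have "val_ge (int k) (V (Suc k) + V k)" for k
    by (simp only: val_ge_monomial)
  from hensel_root_digits[of V, OF V1 this] e(1) show ?thesis
    unfolding V_def by (auto simp: add.assoc)
qed

theorem conic_has_point_if_not_symb:
  assumes y: "y \<in> Kom p" and not_symb: "\<not> symb (psum p y 0)"
  shows "conic_has_point p y"
proof -
  obtain a b where ab: "p_frac a" "p_frac b"
    and "val_ge 0 (psum p y 0 + (a^2 + a + Fract tpoly 1 * b^2))"
    using norm_mod_O_if_not_symb[OF not_symb] unfolding norm_mod_O_def by (auto simp: add.assoc)
  then obtain z e where z: "z \<in> Kom p" and e: "e \<in> digits"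
    and root: "\<And>n. 1 \<le> n \<Longrightarrow> val_ge (int n) ((psum p z (int n))^2 + psum p z (int n)
        + (a^2 + a + Fract tpoly 1 * b^2) + psum p y (int n) + Fract tpoly 1 * (Fract e 1)^2)"
    using exists_root_mod_truncations[OF y] by blast
  obtain sa na where sa: "sa \<in> Kom p" "\<forall>n\<ge>na. psum p sa n = a" using p_frac_digits[OF ab(1)] by blast
  obtain sb nb where sb: "sb \<in> Kom p" "\<forall>n\<ge>nb. psum p sb n = b" using p_frac_digits[OF ab(2)] by blast
  define x0 x1 x2 where "x0 i = sa i + z i" and "x1 i = (if i = 0 then (1::bit poly) else 0)"
    and "x2 i = sb i + (if i = 0 then e else 0)" for i :: int
  have one: "(1::bit poly) \<in> digits" using degree_p_pos by (simp add: in_digits_iff)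
  have Kom: "x0 \<in> Kom p" "x1 \<in> Kom p" "x2 \<in> Kom p"
    unfolding x0_def x1_def x2_def using sa(1) sb(1) z Kom_single[OF one] Kom_single[OF e]
    by (auto intro: Kom_add)
  have expand: "(A + Z)^2 + (A + Z) * 1 + Y * 1^2 + Fract tpoly 1 * (B + E)^2
      = Z^2 + Z + (A^2 + A + Fract tpoly 1 * B^2) + Y + Fract tpoly 1 * E^2" for A B E Y Z
    by (simp add: power2_add_bit_poly_fract algebra_simps)
  have "x1 \<noteq> (\<lambda>_. 0)" by (auto simp: x1_def fun_eq_iff)
  moreover have "val_ge (int M) (conic_trunc p y x0 x1 x2 n)"
    if n: "max (max (nat na) (nat nb)) (max 1 M) \<le> n" for M n
  proof -
    have n': "na \<le> int n" "nb \<le> int n" "1 \<le> n" "M \<le> n" using n by auto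
    have X0: "psum p x0 (int n) = a + psum p z (int n)"
      unfolding x0_def using psum_add[OF sa(1) z] sa(2) n' by simp
    have X1: "psum p x1 (int n) = 1"
      unfolding x1_def using psum_single[OF one, of 0] n' by (simp add: One_fract_def)
    have X2: "psum p x2 (int n) = b + Fract e 1"
      unfolding x2_def using psum_add[OF sb(1) Kom_single[OF e]] sb(2) psum_single[OF e] n' by simp
    have "conic_trunc p y x0 x1 x2 n = (psum p z (int n))^2 + psum p z (int n)
        + (a^2 + a + Fract tpoly 1 * b^2) + psum p y (int n) + Fract tpoly 1 * (Fract e 1)^2"
      unfolding conic_trunc_eq X0 X1 X2 by (rule expand)
    then show ?thesis using root[OF n'(3)] n'(4) val_ge_mono by (metis of_nat_le_iff)
  qed
  ultimately show ?thesis using Kom by (intro conic_has_pointI) blast+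
qed

theorem conic_has_point_iff:
  "y \<in> Kom p \<Longrightarrow> conic_has_point p y \<longleftrightarrow> \<not> symb (psum p y 0)"
  using conic_has_point_if_not_symb not_symb_if_conic_has_point by blast

section \<open>Volumes\<close>

definition symb_om :: "(int \<Rightarrow> bit poly) \<Rightarrow> bool" where
  "symb_om y \<longleftrightarrow> symb (psum p y 0)"

lemma f_om_eq: "y \<in> Kom p \<Longrightarrow> f_om p y = (if symb_om y then 0 else 1)"
  unfolding f_om_def symb_om_def using conic_has_point_iff by simp

lemma zero_in_Kom [simp]: "(\<lambda>_. 0) \<in> Kom p"
  by (rule KomI[of _ 0]) simp_all

lemma symb_om_cong: "\<forall>i<0. y i = z i \<Longrightarrow> symb_om y \<longleftrightarrow> symb_om z"
  unfolding symb_om_def using psum_cong by metis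

lemma not_symb_om_integral: "\<forall>i<0. y i = 0 \<Longrightarrow> \<not> symb_om y"
  unfolding symb_om_def using psum_eq_0_below[of 0 y 0] by (simp add: not_symb_integral)

lemma Kom_update: "c \<in> Kom p \<Longrightarrow> u \<in> digits \<Longrightarrow> c(k := u) \<in> Kom p"
proof -
  assume c: "c \<in> Kom p" and u: "u \<in> digits"
  obtain N where "\<forall>i<N. c i = 0" using Kom_vanishes_below[OF c] by blast
  then show ?thesis using Kom_in_digits[OF c] u by (intro KomI[of _ "min N k"]) auto
qed

lemma symb_om_update:
  assumes c: "c \<in> Kom p" and u: "u \<in> digits"
  shows "symb_om (c(-1 := u)) \<longleftrightarrow> symb_om (c(-1 := 0)) \<noteq> symb1 u"
proof -
  define d where "d = (\<lambda>i::int. if i = -1 then u else 0)"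
  have "c(-1 := u) = (\<lambda>i. (c(-1 := 0)) i + d i)" by (auto simp: d_def)
  then have "psum p (c(-1 := u)) 0 = psum p (c(-1 := 0)) 0 + psum p d 0"
    by (simp only: psum_add[OF Kom_update[OF c zero_in_digits] Kom_single[OF u, of "-1", folded d_def]])
  moreover have "psum p d 0 = Fract u (p ^ 1)"
    using psum_single[OF u, of "-1" 0, folded d_def] unif_powi_neg_nat[of 1] by simp
  ultimately show ?thesis using symb_Fract_p_power[of u 1] by (simp add: symb_om_def symb_add)
qed

lemma card_symb1_eq: "card {u \<in> digits. symb1 u = b} = 2 ^ (degree p - 1)"
proof (cases b)
  case False
  then have "{u \<in> digits. symb1 u = b} = triv_digits"
    using triv_digits_subset by (auto simp: symb1_def)
  then show ?thesis by (simp add: card_triv_digits)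
next
  case True
  then have "{u \<in> digits. symb1 u = b} = digits - triv_digits" by (auto simp: symb1_def)
  then show ?thesis
    using card_Diff_subset[OF finite_triv_digits triv_digits_subset] card_digits_eq_double
      card_triv_digits by simp
qed

lemma val_om_eqI: "y k \<noteq> 0 \<Longrightarrow> \<forall>j<k. y j = 0 \<Longrightarrow> val_om y = k"
  unfolding val_om_def by (rule the_equality) (auto, meson linorder_neqE)

definition digit_patterns :: "int \<Rightarrow> int \<Rightarrow> (int \<Rightarrow> bit poly) set" where
  "digit_patterns a b = {c. (\<forall>i. c i \<in> digits) \<and> (\<forall>i. i < a \<or> b \<le> i \<longrightarrow> c i = 0)}"

lemma digit_patterns_Kom: "c \<in> digit_patterns a b \<Longrightarrow> c \<in> Kom p"
  unfolding digit_patterns_def by (rule KomI[of _ a]) auto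

lemma finite_digit_patterns: "finite (digit_patterns a b)"
proof -
  define f where "f c = map (\<lambda>j. c (a + int j)) [0..<nat (b - a)]" for c :: "int \<Rightarrow> bit poly"
  have "inj_on f (digit_patterns a b)"
  proof (rule inj_onI, rule ext)
    fix c c' i assume c: "c \<in> digit_patterns a b" "c' \<in> digit_patterns a b" "f c = f c'"
    show "c i = c' i"
    proof (cases "a \<le> i \<and> i < b")
      case True
      then have "f c ! nat (i - a) = c i" "f c' ! nat (i - a) = c' i" by (simp_all add: f_def)
      then show ?thesis using c(3) by simp
    qed (use c in \<open>auto simp: digit_patterns_def\<close>)
  qed
  moreover have "f ` digit_patterns a b \<subseteq> {xs. set xs \<subseteq> digits \<and> length xs = nat (b - a)}"
    by (auto simp: f_def digit_patterns_def)
  then have "finite (f ` digit_patterns a b)"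
    using finite_lists_length_eq[OF finite_digits] finite_subset by blast
  ultimately show ?thesis using finite_imageD by blast
qed

end

locale place_haar = place +
  fixes \<mu> :: "(int \<Rightarrow> bit poly) measure"
  assumes haar: "haar_om p \<mu>"
begin

lemma space_eq: "space \<mu> = Kom p"
  using haar by (simp add: haar_om_def)

lemma sets_ball_om [measurable]: "c \<in> Kom p \<Longrightarrow> ball_om p c n \<in> sets \<mu>"
  using haar unfolding haar_om_def by (auto intro: sigma_sets.Basic)

lemma emeasure_ball_om:
  "c \<in> Kom p \<Longrightarrow> emeasure \<mu> (ball_om p c n) = ennreal (2 powr (- (real (degree p) * real_of_int n)))"
  using haar by (simp add: haar_om_def)

lemma measure_ball_om:
  "c \<in> Kom p \<Longrightarrow> measure \<mu> (ball_om p c n) = 2 powr (- (real (degree p) * real_of_int n))"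
  by (simp add: emeasure_ball_om measure_def)

lemma emeasure_subset_ball_om_finite:
  assumes "A \<subseteq> ball_om p c n" "c \<in> Kom p" shows "emeasure \<mu> A \<noteq> \<infinity>"
proof -
  have "emeasure \<mu> A \<le> emeasure \<mu> (ball_om p c n)"
    using assms by (intro emeasure_mono sets_ball_om)
  then show ?thesis using emeasure_ball_om[OF assms(2), of n] by (auto simp: top_unique)
qed

lemma measure_finite_Union_balls:
  assumes "finite I" "\<And>i. i \<in> I \<Longrightarrow> c i \<in> Kom p" "disjoint_family_on (\<lambda>i. ball_om p (c i) n) I"
  shows "measure \<mu> (\<Union>i\<in>I. ball_om p (c i) n) = card I * 2 powr (- (real (degree p) * real_of_int n))"
proof -
  have "measure \<mu> (\<Union>i\<in>I. ball_om p (c i) n) = (\<Sum>i\<in>I. measure \<mu> (ball_om p (c i) n))"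
    using assms emeasure_subset_ball_om_finite[OF order_refl]
    by (intro measure_finite_Union) (auto simp: subset_eq)
  then show ?thesis using assms(2) by (simp add: measure_ball_om)
qed

text \<open>Within a ball \<open>c + p\<^sup>-\<^sup>1\<O>\<^sub>\<omega>\<close> the digit at \<open>p\<^sup>-\<^sup>1\<close> is free, and by \<open>symb_om_update\<close> exactly half of its
  values give trivial symbol.\<close>

definition good_in_ball :: "(int \<Rightarrow> bit poly) \<Rightarrow> (int \<Rightarrow> bit poly) set" where
  "good_in_ball c = {y \<in> ball_om p c (-1). \<not> symb_om y}"

lemma good_in_ball_eq_Union:
  assumes c: "c \<in> Kom p"
  shows "good_in_ball c = (\<Union>u\<in>{u \<in> digits. \<not> symb_om (c(-1 := u))}. ball_om p (c(-1 := u)) 0)"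
proof (intro equalityI subsetI)
  fix y assume "y \<in> good_in_ball c"
  then have y: "y \<in> Kom p" "\<forall>i < -1. y i = c i" "\<not> symb_om y"
    by (auto simp: good_in_ball_def ball_om_def)
  have agree: "\<forall>i<0. y i = (c(-1 := y (-1))) i"
  proof (intro allI impI)
    fix i :: int assume "i < 0"
    then consider "i = -1" | "i < -1" by linarith
    then show "y i = (c(-1 := y (-1))) i" using y(2) by cases auto
  qed
  have "y \<in> ball_om p (c(-1 := y (-1))) 0"
    unfolding ball_om_def using y(1) agree by blast
  moreover have "\<not> symb_om (c(-1 := y (-1)))" using y(3) symb_om_cong[OF agree] by blast
  ultimately show "y \<in> (\<Union>u\<in>{u \<in> digits. \<not> symb_om (c(-1 := u))}. ball_om p (c(-1 := u)) 0)"
    using Kom_in_digits[OF y(1)] by blast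
next
  fix y assume "y \<in> (\<Union>u\<in>{u \<in> digits. \<not> symb_om (c(-1 := u))}. ball_om p (c(-1 := u)) 0)"
  then obtain u where u: "\<not> symb_om (c(-1 := u))" "y \<in> Kom p" "\<forall>i<0. y i = (c(-1 := u)) i"
    by (auto simp: ball_om_def)
  then have "\<not> symb_om y" using symb_om_cong[OF u(3)] by blast
  then show "y \<in> good_in_ball c"
    using u(2,3) by (auto simp: good_in_ball_def ball_om_def)
qed

lemma sets_good_in_ball: "c \<in> Kom p \<Longrightarrow> good_in_ball c \<in> sets \<mu>"
  using finite_digits Kom_update
  by (auto simp: good_in_ball_eq_Union intro!: sets.finite_UN sets_ball_om)

lemma measure_good_in_ball:
  assumes c: "c \<in> Kom p" shows "measure \<mu> (good_in_ball c) = 2 ^ (degree p - 1)"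
proof -
  define U where "U = {u \<in> digits. \<not> symb_om (c(-1 := u))}"
  have "\<not> symb_om (c(-1 := u)) \<longleftrightarrow> symb1 u = symb_om (c(-1 := 0))" if "u \<in> digits" for u
    using symb_om_update[OF c that] by blast
  then have "U = {u \<in> digits. symb1 u = symb_om (c(-1 := 0))}"
    unfolding U_def by blast
  then have "card U = 2 ^ (degree p - 1)" by (simp add: card_symb1_eq)
  moreover have "measure \<mu> (good_in_ball c) = card U * 2 powr (- (real (degree p) * real_of_int 0))"
    unfolding good_in_ball_eq_Union[OF c] U_def[symmetric] using finite_digits Kom_update[OF c]
    by (intro measure_finite_Union_balls) (auto simp: U_def disjoint_family_on_def ball_om_def)
  ultimately show ?thesis by simp
qed

definition pow_ball :: "int \<Rightarrow> (int \<Rightarrow> bit poly) set" where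
  "pow_ball k = ball_om p (\<lambda>_. 0) k"

lemma mem_pow_ball_iff: "y \<in> pow_ball k \<longleftrightarrow> y \<in> Kom p \<and> (\<forall>i<k. y i = 0)"
  by (simp add: pow_ball_def ball_om_def)

lemma sets_pow_ball: "pow_ball k \<in> sets \<mu>"
  unfolding pow_ball_def by (rule sets_ball_om) simp

lemma measure_pow_ball: "measure \<mu> (pow_ball k) = 2 powr (- (real (degree p) * real_of_int k))"
  unfolding pow_ball_def by (rule measure_ball_om) simp

lemma emeasure_pow_ball_finite: "emeasure \<mu> (pow_ball k) \<noteq> \<infinity>"
  unfolding pow_ball_def by (rule emeasure_subset_ball_om_finite) auto

lemma pow_ball_antimono: "j \<le> k \<Longrightarrow> pow_ball k \<subseteq> pow_ball j"
  by (auto simp: mem_pow_ball_iff)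

lemma all_less_plus_1_iff:
  "(\<forall>i<k + 1. y i = (0::'a::zero)) \<longleftrightarrow> (\<forall>i<k. y i = 0) \<and> y k = 0" for k :: int
  by (auto simp: zless_add1_eq) (metis le_less)

definition shell :: "nat \<Rightarrow> (int \<Rightarrow> bit poly) set" where
  "shell n = pow_ball (- int n) - pow_ball (1 - int n)"

lemma mem_shell_iff:
  "y \<in> shell n \<longleftrightarrow> y \<in> Kom p \<and> y (- int n) \<noteq> 0 \<and> (\<forall>j < - int n. y j = 0)"
  using all_less_plus_1_iff[of "- int n"] by (auto simp: shell_def mem_pow_ball_iff)

lemma measure_shell:
  assumes "1 \<le> n"
  shows "measure \<mu> (shell n) = 2 ^ (degree p * n) - 2 ^ (degree p * (n - 1))"
proof -
  have "measure \<mu> (shell n) = measure \<mu> (pow_ball (- int n)) - measure \<mu> (pow_ball (1 - int n))"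
    unfolding shell_def
    by (rule measure_Diff[OF emeasure_pow_ball_finite sets_pow_ball sets_pow_ball pow_ball_antimono]) simp
  also have "\<dots> = 2 powr (real (degree p * n)) - 2 powr (real (degree p * (n - 1)))"
    using assms by (simp add: measure_pow_ball of_nat_diff algebra_simps)
  finally show ?thesis
    using powr_realpow[of 2 "degree p * n"] powr_realpow[of 2 "degree p * (n - 1)"] by simp
qed

lemma shell_disjoint: "m \<noteq> n \<Longrightarrow> shell m \<inter> shell n = {}"
  by (auto simp: mem_shell_iff) (meson linorder_neqE_linordered_idom neg_equal_iff_equal of_nat_eq_iff)

lemma shell_disjoint_pow_ball_0: "1 \<le> n \<Longrightarrow> shell n \<inter> pow_ball 0 = {}"
  by (auto simp: mem_shell_iff mem_pow_ball_iff)

lemma Kom_cases: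
  assumes "y \<in> Kom p" obtains "y \<in> pow_ball 0" | n where "1 \<le> n" "y \<in> shell n"
proof (cases "\<forall>i<0. y i = 0")
  case False
  then obtain k where k: "y k \<noteq> 0" "\<forall>j<k. y j = 0"
    using Kom_least_nonzero[OF assms] by fastforce
  then have "k < 0" using False by (meson not_less order.strict_trans2)
  then have "1 \<le> nat (- k)" "y \<in> shell (nat (- k))"
    using assms k by (auto simp: mem_shell_iff)
  then show ?thesis by (rule that(2))
qed (use assms that(1) in \<open>simp add: mem_pow_ball_iff\<close>)

definition good :: "nat \<Rightarrow> (int \<Rightarrow> bit poly) set" where
  "good n = {y \<in> shell n. \<not> symb_om y}"

lemma good_1_eq: "good 1 = good_in_ball (\<lambda>_. 0) - pow_ball 0"
proof -
  have "y \<in> shell 1 \<longleftrightarrow> y \<in> ball_om p (\<lambda>_. 0) (-1) \<and> y \<notin> pow_ball 0" for y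
    using all_less_plus_1_iff[of "-1" y] by (auto simp: mem_shell_iff mem_pow_ball_iff ball_om_def)
  then show ?thesis by (auto simp: good_def good_in_ball_def)
qed

lemma sets_good_1: "good 1 \<in> sets \<mu>"
  unfolding good_1_eq using sets_good_in_ball[of "\<lambda>_. 0"] sets_pow_ball by simp

lemma measure_good_1: "measure \<mu> (good 1) = 2 ^ (degree p - 1) - 1"
proof -
  have "pow_ball 0 \<subseteq> good_in_ball (\<lambda>_. 0)"
    using pow_ball_antimono[of "-1" 0] not_symb_om_integral
    by (auto simp: good_in_ball_def pow_ball_def mem_pow_ball_iff ball_om_def)
  moreover have "emeasure \<mu> (good_in_ball (\<lambda>_. 0)) \<noteq> \<infinity>"
    by (rule emeasure_subset_ball_om_finite[of _ "\<lambda>_. 0" "-1"]) (auto simp: good_in_ball_def)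
  ultimately show ?thesis
    unfolding good_1_eq using sets_good_in_ball[of "\<lambda>_. 0"] sets_pow_ball
    by (simp add: measure_Diff measure_good_in_ball measure_pow_ball)
qed

definition shell_centres :: "nat \<Rightarrow> (int \<Rightarrow> bit poly) set" where
  "shell_centres n = {c \<in> digit_patterns (- int n) (-1). c (- int n) \<noteq> 0}"

lemma finite_shell_centres: "finite (shell_centres n)"
  unfolding shell_centres_def using finite_digit_patterns by simp

lemma shell_centres_Kom: "shell_centres n \<subseteq> Kom p"
  unfolding shell_centres_def using digit_patterns_Kom by blast

lemma shell_eq_Union:
  assumes "2 \<le> n" shows "shell n = (\<Union>c\<in>shell_centres n. ball_om p c (-1))"
proof (intro equalityI subsetI)
  fix y assume y: "y \<in> shell n"
  define c where "c i = (if - int n \<le> i \<and> i < -1 then y i else 0)" for i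
  have "c \<in> shell_centres n" "y \<in> ball_om p c (-1)"
    using y assms Kom_in_digits
    by (auto simp: shell_centres_def digit_patterns_def c_def mem_shell_iff ball_om_def)
  then show "y \<in> (\<Union>c\<in>shell_centres n. ball_om p c (-1))" by blast
next
  fix y assume "y \<in> (\<Union>c\<in>shell_centres n. ball_om p c (-1))"
  then obtain c where "c \<in> shell_centres n" "y \<in> ball_om p c (-1)" by blast
  then show "y \<in> shell n"
    using assms by (auto simp: shell_centres_def digit_patterns_def mem_shell_iff ball_om_def)
qed

lemma disjoint_shell_centres: "disjoint_family_on (\<lambda>c. ball_om p c (-1)) (shell_centres n)"
  unfolding disjoint_family_on_def
proof (intro ballI impI)
  fix c c' assume c: "c \<in> shell_centres n" "c' \<in> shell_centres n" "c \<noteq> c'"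
  then obtain i where "c i \<noteq> c' i" by blast
  moreover have "c j = 0" "c' j = 0" if "-1 \<le> j" for j
    using c(1,2) that by (auto simp: shell_centres_def digit_patterns_def)
  ultimately have "i < -1" by (metis not_less)
  with \<open>c i \<noteq> c' i\<close> show "ball_om p c (-1) \<inter> ball_om p c' (-1) = {}" unfolding ball_om_def by auto
qed

lemma good_eq_Union: "2 \<le> n \<Longrightarrow> good n = (\<Union>c\<in>shell_centres n. good_in_ball c)"
  unfolding good_def shell_eq_Union good_in_ball_def by auto

lemma sets_good: "1 \<le> n \<Longrightarrow> good n \<in> sets \<mu>"
proof (cases "n = 1")
  case True
  then show ?thesis using sets_good_1 by simp
next
  case False
  moreover assume "1 \<le> n"
  ultimately show ?thesis using finite_shell_centres shell_centres_Kom sets_good_in_ball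
    by (auto simp: good_eq_Union intro!: sets.finite_UN)
qed

lemma measure_good:
  assumes "2 \<le> n" shows "measure \<mu> (good n) = measure \<mu> (shell n) / 2"
proof -
  have "disjoint_family_on good_in_ball (shell_centres n)"
    using disjoint_shell_centres unfolding disjoint_family_on_def good_in_ball_def by blast
  moreover have "emeasure \<mu> (good_in_ball c) \<noteq> \<infinity>" if "c \<in> shell_centres n" for c
    using that shell_centres_Kom
    by (intro emeasure_subset_ball_om_finite[of _ c "-1"]) (auto simp: good_in_ball_def)
  moreover have "good_in_ball ` shell_centres n \<subseteq> sets \<mu>"
    using shell_centres_Kom sets_good_in_ball by blast
  ultimately have "measure \<mu> (good n) = (\<Sum>c\<in>shell_centres n. measure \<mu> (good_in_ball c))"
    unfolding good_eq_Union[OF assms] using finite_shell_centres by (intro measure_finite_Union)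
  also have "\<dots> = card (shell_centres n) * 2 ^ (degree p - 1)"
    using shell_centres_Kom measure_good_in_ball by (simp add: subset_eq)
  also have "measure \<mu> (shell n) = card (shell_centres n) * 2 ^ degree p"
    unfolding shell_eq_Union[OF assms]
    using measure_finite_Union_balls[OF finite_shell_centres _ disjoint_shell_centres] shell_centres_Kom
    by (simp add: subset_eq powr_realpow)
  ultimately show ?thesis by (simp add: two_power_degree_p)
qed

lemma H_om_pow_ball_0: "y \<in> pow_ball 0 \<Longrightarrow> H_om p y = 1"
proof (cases "y = (\<lambda>_. 0)")
  case False
  assume y: "y \<in> pow_ball 0"
  then have "y \<in> Kom p" by (simp add: mem_pow_ball_iff)
  then obtain k where k: "y k \<noteq> 0" "\<forall>j<k. y j = 0"
    using Kom_least_nonzero False by blast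
  then have "0 \<le> k" using y by (auto simp: mem_pow_ball_iff) (meson not_le)
  then have "abs_om p y \<le> 1"
    using False val_om_eqI[OF k] powr_mono[of "- (real (degree p) * real_of_int k)" 0 2]
    by (simp add: abs_om_def)
  then show ?thesis by (simp add: H_om_def)
qed (simp add: H_om_def abs_om_def)

lemma H_om_shell: "y \<in> shell n \<Longrightarrow> H_om p y = 2 powr (real (degree p) * real n)"
proof -
  assume "y \<in> shell n"
  then have "y \<noteq> (\<lambda>_. 0)" "val_om y = - int n" by (auto simp: mem_shell_iff intro: val_om_eqI)
  moreover have "1 \<le> 2 powr (real (degree p) * real n)"
    using powr_mono[of 0 "real (degree p) * real n" 2] by simp
  ultimately show ?thesis by (simp add: H_om_def abs_om_def)
qed

end

section \<open>The integral\<close>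

lemma sums_shell_series:
  fixes q Q :: complex and t :: "nat \<Rightarrow> complex"
  assumes ratio: "norm (q / Q) < 1" and nonzero: "q \<noteq> 0" "Q \<noteq> 0"
    and t0: "t 0 = 1" and t1: "t 1 = (q / 2 - 1) / Q"
    and tn: "\<And>n. 2 \<le> n \<Longrightarrow> t n = (q ^ n - q ^ (n - 1)) / 2 / Q ^ n"
  shows "t sums (1 + (q / 2 - 1) / Q + (q - 1) / (2 * q) * (q / Q)^2 / (1 - q / Q))"
proof -
  have "t (Suc (Suc n)) = (q ^ Suc (Suc n) - q ^ Suc n) / 2 / Q ^ Suc (Suc n)" for n
    using tn[of "Suc (Suc n)"] by simp
  also have "\<dots> n = (q - 1) / (2 * q) * (q / Q)^2 * (q / Q) ^ n" for n
    using nonzero by (simp add: field_simps power2_eq_square)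
  finally have "t (Suc (Suc n)) = (q - 1) / (2 * q) * (q / Q)^2 * (q / Q) ^ n" for n .
  moreover have "(\<lambda>n. (q - 1) / (2 * q) * (q / Q)^2 * (q / Q) ^ n)
      sums ((q - 1) / (2 * q) * (q / Q)^2 * (1 / (1 - q / Q)))"
    using geometric_sums[OF ratio] by (rule sums_mult)
  ultimately have "(\<lambda>n. t (Suc (Suc n))) sums ((q - 1) / (2 * q) * (q / Q)^2 / (1 - q / Q))"
    by simp
  then show ?thesis
    using sums_Suc_iff[where f = t] sums_Suc_iff[where f = "\<lambda>n. t (Suc n)"] t0 t1
    by (simp add: algebra_simps)
qed

lemma shell_series_closed_forms:
  fixes q Q :: complex
  assumes "q \<noteq> 0" "Q \<noteq> 0" "Q \<noteq> q"
  defines "S \<equiv> 1 + (q / 2 - 1) / Q + (q - 1) / (2 * q) * (q / Q)^2 / (1 - q / Q)"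
  shows "S = 1 + 1/2 * (1 / (Q / q) * (1 + (1 - inverse q) / (Q / q - 1)) - 1 / (Q / 2))"
    and "S = 1 + 1/2 * (1 / (Q / q)) * (1 - 1 / (q / 2) + (1 - inverse q) / (Q / q * (1 - q / Q)))"
proof -
  have "Q - q \<noteq> 0" "1 - q / Q = (Q - q) / Q" "Q / q - 1 = (Q - q) / q"
    using assms by (simp_all add: field_simps)
  then show "S = 1 + 1/2 * (1 / (Q / q) * (1 + (1 - inverse q) / (Q / q - 1)) - 1 / (Q / 2))"
    and "S = 1 + 1/2 * (1 / (Q / q)) * (1 - 1 / (q / 2) + (1 - inverse q) / (Q / q * (1 - q / Q)))"
    using assms by (simp_all add: S_def field_simps power2_eq_square)
qed

context place_haar
begin

definition piece :: "nat \<Rightarrow> (int \<Rightarrow> bit poly) set" where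
  "piece n = (if n = 0 then pow_ball 0 else good n)"

lemma piece_subset_pow_ball: "piece n \<subseteq> pow_ball (- int n)"
  by (auto simp: piece_def good_def shell_def)

lemma sets_piece: "piece n \<in> sets \<mu>"
  by (simp add: piece_def sets_pow_ball sets_good)

lemma emeasure_piece_finite: "emeasure \<mu> (piece n) < \<infinity>"
proof -
  have "emeasure \<mu> (piece n) \<noteq> \<infinity>"
    using piece_subset_pow_ball[of n] unfolding pow_ball_def
    by (rule emeasure_subset_ball_om_finite) simp
  then show ?thesis by (simp add: less_top)
qed

lemma disjoint_family_piece: "disjoint_family piece"
  unfolding disjoint_family_on_def
proof (intro ballI impI)
  fix m n :: nat assume "m \<noteq> n"
  have "piece k \<subseteq> shell k" if "k \<noteq> 0" for k
    using that by (auto simp: piece_def good_def)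
  moreover have "piece 0 \<inter> shell k = {}" if "k \<noteq> 0" for k
    using shell_disjoint_pow_ball_0[of k] that by (auto simp: piece_def)
  ultimately show "piece m \<inter> piece n = {}"
    using shell_disjoint[OF \<open>m \<noteq> n\<close>] \<open>m \<noteq> n\<close> by (cases "m = 0"; cases "n = 0") blast+
qed

lemma measure_piece_le: "measure \<mu> (piece n) \<le> 2 powr (real (degree p) * real n)"
proof -
  have "measure \<mu> (piece n) \<le> measure \<mu> (pow_ball (- int n))"
    using piece_subset_pow_ball sets_piece sets_pow_ball emeasure_pow_ball_finite
    by (intro measure_mono_fmeasurable) (auto simp: fmeasurable_def less_top)
  then show ?thesis by (simp add: measure_pow_ball)
qed

lemma measure_piece:
  "measure \<mu> (piece n) =
     (if n = 0 then 1 else if n = 1 then 2 ^ (degree p - 1) - 1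
      else (2 ^ (degree p * n) - 2 ^ (degree p * (n - 1))) / 2)"
proof -
  consider "n = 0" | "n = 1" | "2 \<le> n" by linarith
  then show ?thesis
  proof cases
    case 2
    then show ?thesis using measure_good_1 by (simp add: piece_def)
  qed (simp_all add: piece_def measure_pow_ball measure_good measure_shell)
qed

context
  fixes s :: complex
begin

definition height_term :: "nat \<Rightarrow> complex" where
  "height_term n = complex_of_real (2 powr (real (degree p) * real n)) powr (- s)"

lemma height_term_eq: "height_term n = inverse (2 powr (s * of_nat (degree p))) ^ n"
proof -
  have "height_term n = inverse (2 powr (of_nat n * (s * of_nat (degree p))))"
    by (simp add: height_term_def of_real_two_powr_powr powr_minus mult_ac)
  also have "\<dots> = inverse (2 powr (s * of_nat (degree p))) ^ n"
    by (simp add: powr_power power_inverse)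
  finally show ?thesis .
qed

lemma integrand_on_piece:
  "y \<in> piece n \<Longrightarrow> complex_of_real (f_om p y) * complex_of_real (H_om p y) powr (- s) = height_term n"
  unfolding piece_def height_term_def
  by (auto simp: f_om_eq good_def H_om_shell H_om_pow_ball_0 mem_pow_ball_iff not_symb_om_integral
      mem_shell_iff split: if_splits)

lemma integrand_off_pieces:
  assumes "y \<in> space \<mu>" "\<And>n. y \<notin> piece n"
  shows "complex_of_real (f_om p y) * complex_of_real (H_om p y) powr (- s) = 0"
proof -
  have y: "y \<in> Kom p" using assms(1) space_eq by simp
  then show ?thesis
  proof (cases rule: Kom_cases)
    case 1
    then show ?thesis using assms(2)[of 0] by (simp add: piece_def)
  next
    case (2 n)
    then have "symb_om y" using assms(2)[of n] by (simp add: piece_def good_def)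
    then show ?thesis using y by (simp add: f_om_eq)
  qed
qed

lemma summable_piece_terms:
  assumes Re_s: "Re s > 1" shows "summable (\<lambda>n. measure \<mu> (piece n) * norm (height_term n))"
proof (rule summable_comparison_test')
  define r where "r = 2 powr (real (degree p) * (1 - Re s))"
  have "real (degree p) * (1 - Re s) < 0" using degree_p_pos Re_s by (simp add: mult_pos_neg)
  then show "summable (\<lambda>n. r ^ n)" by (intro summable_geometric) (simp add: r_def powr_less_one)
  fix n :: nat
  have "norm (height_term n) = 2 powr (- (real (degree p) * real n * Re s))"
    unfolding height_term_def by (subst norm_powr_real_powr) (simp_all add: powr_powr)
  then have "norm (measure \<mu> (piece n) * norm (height_term n))
      \<le> 2 powr (real (degree p) * real n) * 2 powr (- (real (degree p) * real n * Re s))"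
    using measure_piece_le by (simp add: mult_right_mono)
  also have "\<dots> = r ^ n"
    by (simp add: r_def powr_realpow[symmetric] powr_powr flip: powr_add) (simp add: algebra_simps)
  finally show "norm (measure \<mu> (piece n) * norm (height_term n)) \<le> r ^ n" .
qed

lemma norm_ratio_less_1:
  assumes Re_s: "Re s > 1" shows "norm ((2::complex) ^ degree p / 2 powr (s * of_nat (degree p))) < 1"
proof -
  have "norm ((2::complex) powr (s * of_nat (degree p))) = 2 powr (Re s * real (degree p))"
    by (simp add: norm_powr_real_powr)
  then have "norm ((2::complex) ^ degree p / 2 powr (s * of_nat (degree p)))
      = 2 powr (real (degree p) * (1 - Re s))"
    by (simp add: norm_divide norm_power powr_realpow[symmetric] flip: powr_diff)
      (simp add: algebra_simps)
  also have "\<dots> < 1" using degree_p_pos Re_s by (simp add: mult_pos_neg powr_less_one)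
  finally show ?thesis .
qed

lemma integral_closed_form:
  assumes Re_s: "Re s > 1"
  defines "q \<equiv> (2::complex) ^ degree p" and "Q \<equiv> 2 powr (s * of_nat (degree p))"
  shows "(LINT y|\<mu>. complex_of_real (f_om p y) * complex_of_real (H_om p y) powr (- s))
      = 1 + (q / 2 - 1) / Q + (q - 1) / (2 * q) * (q / Q)^2 / (1 - q / Q)"
proof -
  define t where "t = (\<lambda>n. complex_of_real (measure \<mu> (piece n)) * height_term n)"
  have "t sums (LINT y|\<mu>. complex_of_real (f_om p y) * complex_of_real (H_om p y) powr (- s))"
    using sums_integral_piecewise_constant[where
        g = "\<lambda>y. complex_of_real (f_om p y) * complex_of_real (H_om p y) powr (- s)",
        OF sets_piece emeasure_piece_finite disjoint_family_piece
        integrand_on_piece integrand_off_pieces summable_piece_terms[OF Re_s]]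
    unfolding t_def scaleR_conv_of_real .
  moreover have "t sums (1 + (q / 2 - 1) / Q + (q - 1) / (2 * q) * (q / Q)^2 / (1 - q / Q))"
  proof (rule sums_shell_series)
    show "norm (q / Q) < 1" "q \<noteq> 0" "Q \<noteq> 0"
      using norm_ratio_less_1[OF Re_s] by (simp_all add: q_def Q_def)
    show "t 0 = 1" by (simp add: t_def measure_piece height_term_eq)
    have "t 1 = complex_of_real (2 ^ (degree p - 1) - 1) * inverse Q"
      unfolding t_def height_term_eq Q_def by (simp add: measure_piece)
    also have "complex_of_real (2 ^ (degree p - 1) - 1) = q / 2 - 1"
      unfolding q_def using two_power_degree_p[where 'a = complex] by simp
    finally show "t 1 = (q / 2 - 1) / Q" by (simp only: divide_inverse)
    fix n :: nat assume "2 \<le> n"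
    then have "t n = complex_of_real ((2 ^ (degree p * n) - 2 ^ (degree p * (n - 1))) / 2) * inverse Q ^ n"
      unfolding t_def height_term_eq Q_def by (simp add: measure_piece)
    also have "complex_of_real ((2 ^ (degree p * n) - 2 ^ (degree p * (n - 1))) / 2) = (q ^ n - q ^ (n - 1)) / 2"
      unfolding q_def by (simp add: power_mult)
    finally show "t n = (q ^ n - q ^ (n - 1)) / 2 / Q ^ n" by (simp only: divide_inverse power_inverse)
  qed
  ultimately show ?thesis using sums_unique2 by blast
qed

end

end

theorem lemma4p2:
  fixes p :: "bit poly" and \<mu> :: "(int \<Rightarrow> bit poly) measure" and s :: complex
  assumes "irreducible p" and "lead_coeff p = 1" and "p \<noteq> tpoly"
    and "haar_om p \<mu>" and "Re s > 1"
  shows "(LINT y|\<mu>. complex_of_real (f_om p y) * complex_of_real (H_om p y) powr (- s))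
           = 1 + 1/2 * (1 / 2 powr ((s - 1) * of_nat (degree p))
                 * (1 + (1 - 2 powr (- of_nat (degree p))) / (2 powr ((s - 1) * of_nat (degree p)) - 1))
               - 1 / 2 powr (s * of_nat (degree p) - 1))
       \<and> (LINT y|\<mu>. complex_of_real (f_om p y) * complex_of_real (H_om p y) powr (- s))
           = 1 + 1/2 * (1 / 2 powr ((s - 1) * of_nat (degree p)))
               * (1 - 1 / 2 powr (of_nat (degree p) - 1)
                  + (1 - 2 powr (- of_nat (degree p)))
                    / (2 powr ((s - 1) * of_nat (degree p)) * (1 - 2 powr (- (s - 1) * of_nat (degree p)))))"
proof -
  interpret place_haar p \<mu> using assms(1,3,4) by unfold_locales
  define q Q where "q = (2::complex) ^ degree p" and "Q = (2::complex) powr (s * of_nat (degree p))"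
  have "(s - 1) * of_nat (degree p) = s * of_nat (degree p) - of_nat (degree p)"
    "- (s - 1) * of_nat (degree p) = of_nat (degree p) - s * of_nat (degree p)"
    by (simp_all add: algebra_simps)
  moreover have two_pow: "(2::complex) powr of_nat (degree p) = 2 ^ degree p" by simp
  ultimately have powr_eqs:
    "2 powr ((s - 1) * of_nat (degree p)) = Q / q" "2 powr (- of_nat (degree p)) = inverse q"
    "2 powr (s * of_nat (degree p) - 1) = Q / 2" "2 powr (of_nat (degree p) - 1) = q / 2"
    "2 powr (- (s - 1) * of_nat (degree p)) = q / Q"
    by (simp_all only: q_def Q_def powr_diff powr_minus two_pow powr_to_1)
  have "q \<noteq> 0" "Q \<noteq> 0" "Q \<noteq> q"
    using norm_ratio_less_1[OF assms(5)] by (auto simp: q_def Q_def)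
  then show ?thesis
    unfolding integral_closed_form[OF assms(5), folded q_def Q_def] powr_eqs
    using shell_series_closed_forms by blast
qed

end
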